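(* Let $k$ be an ordinary differential field of characteristic zero, let $R=k\{y_1,\ldots,y_l\}$, and fix a ranking on the derivatives. Every prime differential ideal $P\subsetneq R$ admits a (Kolchin) characteristic set $\mathbb{C}=C_1,\ldots,C_p$ (listed in increasing rank) with the following two properties: (1) $\mathbb{C}$ is irreducible: $C_1$ is an irreducible polynomial in $R$, and for each $1\le i<p$, $C_{i+1}$ is irreducible in the ring $\operatorname{Quot}\big(k[V_i]/(C_1,\ldots,C_i):I_i^\infty\big)[U_i]$, where $V_i$ is the set of all derivatives appearing in $C_1,\ldots,C_i$, $I_i^\infty$ is the multiplicative set generated by the initials of $C_1,\ldots,C_i$, and $U_i$ is the set of derivatives appearing in $C_{i+1}$ but not in $V_i$; (2) for every $t$ such that $y_t$ or one of its derivatives appears in $\mathbb{C}$, let $s$ be the maximal order of a derivative of $y_t$ appearing in the elements of $\mathbb{C}$, and let $i$ be the least index such that $y_t^{(s)}$ appears in $C_i$; then $\partial C_i/\partial y_t^{(s)}\notin P$.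
   Context: $k$ is a differential field of characteristic zero with one derivation $\delta$; $R=k\{y_1,\dots,y_l\}$ is the polynomial ring over $k$ in the derivatives $y_j^{(r)}=\delta^r y_j$, with $\delta$ extended; the order of $y_j^{(r)}$ is $r$. A ranking is a total order on the derivatives with $\delta u> u$... more precisely $\theta u\ge u$ and $u\ge v\Rightarrow\theta u\ge\theta v$ for all derivative operators $\theta$. For $f\notin k$: leader $u_f$ = highest ranked derivative in $f$; initial $I_f$ = leading coefficient of $f$ as a polynomial in $u_f$; separant $S_f=\partial f/\partial u_f$. $f$ is reduced w.r.t. $g$ if no proper derivative of $u_g$ appears in $f$ and $\deg_{u_g}f<\deg_{u_g}g$. An autoreduced set is a set disjoint from $k$ each of whose elements is reduced w.r.t. the others; its elements are listed in increasing rank ($f<g$ if $u_f<u_g$, or $u_f=u_g$ and smaller degree in $u_f$), and autoreduced sets are compared lexicographically, a proper extension having lower rank. A (Kolchin) characteristic set of a differential ideal $I$ is an autoreduced subset of $I$ of lowest rank. For a finite set $S$, $S^\infty$ denotes the multiplicative set it generates and $J:S^\infty=\{a:\exists s\in S^\infty, sa\in J\}$. *)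

theory Defs
  imports "HOL-Library.Poly_Mapping" "HOL-Computational_Algebra.Factorial_Ring"
begin

text \<open>Differential polynomials in the indeterminates y_j (j ranging over a finite index
type 'j, playing the role of {1..l}).  The derivative y_j^(r) is the variable (j, r).\<close>

type_synonym ('j, 'k) dpoly = "(('j \<times> nat) \<Rightarrow>\<^sub>0 nat) \<Rightarrow>\<^sub>0 'k"

definition dVar :: "'j \<times> nat \<Rightarrow> ('j, 'k::comm_ring_1) dpoly" where
  "dVar v = Poly_Mapping.single (Poly_Mapping.single v 1) 1"

definition dConst :: "'k::comm_ring_1 \<Rightarrow> ('j, 'k) dpoly" where
  "dConst c = Poly_Mapping.single 0 c"

definition dvars :: "('j, 'k::comm_ring_1) dpoly \<Rightarrow> ('j \<times> nat) set" where
  "dvars p = (\<Union>m \<in> Poly_Mapping.keys p. Poly_Mapping.keys m)"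

text \<open>k[W]: polynomials involving only derivatives from W.\<close>
definition polys_in :: "('j \<times> nat) set \<Rightarrow> ('j, 'k::comm_ring_1) dpoly set" where
  "polys_in W = {p. dvars p \<subseteq> W}"

definition degv :: "'j \<times> nat \<Rightarrow> ('j, 'k::comm_ring_1) dpoly \<Rightarrow> nat" where
  "degv v p = Max (insert 0 ((\<lambda>m. Poly_Mapping.lookup m v) ` Poly_Mapping.keys p))"

definition coeffv :: "'j \<times> nat \<Rightarrow> nat \<Rightarrow> ('j, 'k::comm_ring_1) dpoly \<Rightarrow> ('j, 'k) dpoly" where
  "coeffv v d p = (\<Sum>m \<in> {m \<in> Poly_Mapping.keys p. Poly_Mapping.lookup m v = d}.
       Poly_Mapping.single (Poly_Mapping.update v 0 m) (Poly_Mapping.lookup p m))"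

definition pderivv :: "'j \<times> nat \<Rightarrow> ('j, 'k::comm_ring_1) dpoly \<Rightarrow> ('j, 'k) dpoly" where
  "pderivv v p = (\<Sum>m \<in> Poly_Mapping.keys p.
       Poly_Mapping.single (Poly_Mapping.update v (Poly_Mapping.lookup m v - 1) m)
                           (of_nat (Poly_Mapping.lookup m v) * Poly_Mapping.lookup p m))"

text \<open>A ranking (given as its reflexive order relation le u v meaning u is ranked at most v).\<close>
definition ranking :: "('j \<times> nat \<Rightarrow> 'j \<times> nat \<Rightarrow> bool) \<Rightarrow> bool" where
  "ranking le \<longleftrightarrow>
     (\<forall>u. le u u) \<and> (\<forall>u v w. le u v \<longrightarrow> le v w \<longrightarrow> le u w) \<and>
     (\<forall>u v. le u v \<longrightarrow> le v u \<longrightarrow> u = v) \<and> (\<forall>u v. le u v \<or> le v u) \<and>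
     (\<forall>j r s. le (j, r) (j, r + s)) \<and>
     (\<forall>j r j' r' s. le (j, r) (j', r') \<longrightarrow> le (j, r + s) (j', r' + s))"

text \<open>Leader of a non-constant differential polynomial.\<close>
definition leader :: "('j \<times> nat \<Rightarrow> 'j \<times> nat \<Rightarrow> bool) \<Rightarrow> ('j, 'k::comm_ring_1) dpoly \<Rightarrow> 'j \<times> nat" where
  "leader le f = (THE u. u \<in> dvars f \<and> (\<forall>v \<in> dvars f. le v u))"

definition initial :: "('j \<times> nat \<Rightarrow> 'j \<times> nat \<Rightarrow> bool) \<Rightarrow> ('j, 'k::comm_ring_1) dpoly \<Rightarrow> ('j, 'k) dpoly" where
  "initial le f = coeffv (leader le f) (degv (leader le f) f) f"

definition separant :: "('j \<times> nat \<Rightarrow> 'j \<times> nat \<Rightarrow> bool) \<Rightarrow> ('j, 'k::comm_ring_1) dpoly \<Rightarrow> ('j, 'k) dpoly" where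
  "separant le f = pderivv (leader le f) f"

definition nonconst :: "('j, 'k::comm_ring_1) dpoly \<Rightarrow> bool" where
  "nonconst f \<longleftrightarrow> dvars f \<noteq> {}"

definition reduced :: "('j \<times> nat \<Rightarrow> 'j \<times> nat \<Rightarrow> bool) \<Rightarrow> ('j, 'k::comm_ring_1) dpoly \<Rightarrow> ('j, 'k) dpoly \<Rightarrow> bool" where
  "reduced le f g \<longleftrightarrow>
     (\<forall>s>0. (fst (leader le g), snd (leader le g) + s) \<notin> dvars f) \<and>
     degv (leader le g) f < degv (leader le g) g"

definition poly_rank_less :: "('j \<times> nat \<Rightarrow> 'j \<times> nat \<Rightarrow> bool) \<Rightarrow> ('j, 'k::comm_ring_1) dpoly \<Rightarrow> ('j, 'k) dpoly \<Rightarrow> bool" where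
  "poly_rank_less le f g \<longleftrightarrow>
     (le (leader le f) (leader le g) \<and> leader le f \<noteq> leader le g) \<or>
     (leader le f = leader le g \<and> degv (leader le f) f < degv (leader le g) g)"

definition poly_rank_eq :: "('j \<times> nat \<Rightarrow> 'j \<times> nat \<Rightarrow> bool) \<Rightarrow> ('j, 'k::comm_ring_1) dpoly \<Rightarrow> ('j, 'k) dpoly \<Rightarrow> bool" where
  "poly_rank_eq le f g \<longleftrightarrow> leader le f = leader le g \<and> degv (leader le f) f = degv (leader le g) g"

definition autoreduced :: "('j \<times> nat \<Rightarrow> 'j \<times> nat \<Rightarrow> bool) \<Rightarrow> ('j, 'k::comm_ring_1) dpoly list \<Rightarrow> bool" where
  "autoreduced le A \<longleftrightarrow>
     (\<forall>i < length A. nonconst (A ! i)) \<and>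
     (\<forall>i < length A. \<forall>j < length A. i \<noteq> j \<longrightarrow> reduced le (A ! i) (A ! j)) \<and>
     (\<forall>i j. i < j \<longrightarrow> j < length A \<longrightarrow> poly_rank_less le (A ! i) (A ! j))"

text \<open>Lexicographic comparison of autoreduced sets: A has lower rank than B
(a proper extension having lower rank).\<close>
definition aset_rank_less :: "('j \<times> nat \<Rightarrow> 'j \<times> nat \<Rightarrow> bool) \<Rightarrow> ('j, 'k::comm_ring_1) dpoly list \<Rightarrow> ('j, 'k) dpoly list \<Rightarrow> bool" where
  "aset_rank_less le A B \<longleftrightarrow>
     (\<exists>i < min (length A) (length B).
        (\<forall>j < i. poly_rank_eq le (A ! j) (B ! j)) \<and> poly_rank_less le (A ! i) (B ! i)) \<or>
     (length B < length A \<and> (\<forall>j < length B. poly_rank_eq le (A ! j) (B ! j)))"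

definition char_set :: "('j \<times> nat \<Rightarrow> 'j \<times> nat \<Rightarrow> bool) \<Rightarrow> ('j, 'k::comm_ring_1) dpoly set \<Rightarrow> ('j, 'k) dpoly list \<Rightarrow> bool" where
  "char_set le I C \<longleftrightarrow>
     autoreduced le C \<and> set C \<subseteq> I \<and>
     (\<forall>B. autoreduced le B \<and> set B \<subseteq> I \<longrightarrow> \<not> aset_rank_less le B C)"

definition ideal_in :: "('j \<times> nat) set \<Rightarrow> ('j, 'k::comm_ring_1) dpoly set \<Rightarrow> ('j, 'k) dpoly set" where
  "ideal_in W S = {p. \<exists>as ss. length as = length ss \<and> set as \<subseteq> polys_in W \<and> set ss \<subseteq> S \<and>
                       p = sum_list (map2 (*) as ss)}"

definition mult_closure :: "('j, 'k::comm_ring_1) dpoly set \<Rightarrow> ('j, 'k) dpoly set" where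
  "mult_closure T = {prod_list xs | xs. set xs \<subseteq> T}"

text \<open>Saturation (S) : T^infinity computed in k[W].\<close>
definition saturation_in :: "('j \<times> nat) set \<Rightarrow> ('j, 'k::comm_ring_1) dpoly set \<Rightarrow> ('j, 'k) dpoly set \<Rightarrow> ('j, 'k) dpoly set" where
  "saturation_in W S T = {a \<in> polys_in W. \<exists>s \<in> mult_closure T. s * a \<in> ideal_in W S}"

definition prime_ideal_in :: "('j \<times> nat) set \<Rightarrow> ('j, 'k::comm_ring_1) dpoly set \<Rightarrow> bool" where
  "prime_ideal_in W J \<longleftrightarrow>
     J \<subseteq> polys_in W \<and> 0 \<in> J \<and> (\<forall>a\<in>J. \<forall>b\<in>J. a + b \<in> J) \<and>
     (\<forall>a\<in>J. \<forall>r\<in>polys_in W. r * a \<in> J) \<and> 1 \<notin> J \<and>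
     (\<forall>a\<in>polys_in W. \<forall>b\<in>polys_in W. a * b \<in> J \<longrightarrow> a \<in> J \<or> b \<in> J)"

text \<open>Units of Quot(k[V]/J)[U] (J prime, U disjoint from V), for an element represented
by f in k[V \<union> U] (which represents an element of (k[V]/J)[U] = k[V \<union> U]/J k[V \<union> U]):
f is nonzero and congruent modulo J k[V \<union> U] to an element of k[V].\<close>
definition frac_unit :: "('j \<times> nat) set \<Rightarrow> ('j, 'k::comm_ring_1) dpoly set \<Rightarrow> ('j \<times> nat) set \<Rightarrow> ('j, 'k) dpoly \<Rightarrow> bool" where
  "frac_unit V J U f \<longleftrightarrow>
     f \<notin> ideal_in (V \<union> U) J \<and> (\<exists>g \<in> polys_in V. f - g \<in> ideal_in (V \<union> U) J)"

text \<open>f in k[V \<union> U] is irreducible in Quot(k[V]/J)[U].  Every element of Quot(k[V]/J)[U]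
is g/d with g in (k[V]/J)[U] and d a nonzero element of k[V]/J, so a factorization
f = (g/d1)(h/d2) amounts to d f \<equiv> g h modulo J k[V \<union> U] with d \<in> k[V] - J.
We require J to be a prime ideal of k[V] (so that the quotient field exists) and
U disjoint from V.\<close>
definition irreducible_over_frac :: "('j \<times> nat) set \<Rightarrow> ('j, 'k::comm_ring_1) dpoly set \<Rightarrow> ('j \<times> nat) set \<Rightarrow> ('j, 'k) dpoly \<Rightarrow> bool" where
  "irreducible_over_frac V J U f \<longleftrightarrow>
     prime_ideal_in V J \<and> V \<inter> U = {} \<and> f \<in> polys_in (V \<union> U) \<and>
     f \<notin> ideal_in (V \<union> U) J \<and> \<not> frac_unit V J U f \<and>
     (\<forall>g \<in> polys_in (V \<union> U). \<forall>h \<in> polys_in (V \<union> U). \<forall>d \<in> polys_in V - J.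
        d * f - g * h \<in> ideal_in (V \<union> U) J \<longrightarrow> frac_unit V J U g \<or> frac_unit V J U h)"

text \<open>Property (1): the chain C = C_1, ..., C_p is irreducible.  With 0-based list indices,
V_i = derivatives in C!0..C!(i-1), I_i the initials of these, U_i = dvars (C!i) - V_i.\<close>
definition irreducible_chain :: "('j \<times> nat \<Rightarrow> 'j \<times> nat \<Rightarrow> bool) \<Rightarrow> ('j, 'k::comm_ring_1) dpoly list \<Rightarrow> bool" where
  "irreducible_chain le C \<longleftrightarrow>
     (C \<noteq> [] \<longrightarrow> irreducible (C ! 0)) \<and>
     (\<forall>i. 0 < i \<longrightarrow> i < length C \<longrightarrow>
        (let V = (\<Union>j<i. dvars (C ! j));
             J = saturation_in V (set (take i C)) (initial le ` set (take i C));
             U = dvars (C ! i) - V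
         in irreducible_over_frac V J U (C ! i)))"

definition separant_condition :: "('j, 'k::comm_ring_1) dpoly set \<Rightarrow> ('j, 'k) dpoly list \<Rightarrow> bool" where
  "separant_condition P C \<longleftrightarrow>
     (\<forall>t. (\<exists>r. (t, r) \<in> (\<Union>c \<in> set C. dvars c)) \<longrightarrow>
        (let s = Max {r. (t, r) \<in> (\<Union>c \<in> set C. dvars c)};
             i = (LEAST i. i < length C \<and> (t, s) \<in> dvars (C ! i))
         in pderivv (t, s) (C ! i) \<notin> P))"

definition is_derivation :: "('k::comm_ring_1 \<Rightarrow> 'k) \<Rightarrow> bool" where
  "is_derivation d \<longleftrightarrow> (\<forall>a b. d (a + b) = d a + d b) \<and> (\<forall>a b. d (a * b) = a * d b + d a * b)"

definition extends_derivation :: "('k::comm_ring_1 \<Rightarrow> 'k) \<Rightarrow> (('j, 'k) dpoly \<Rightarrow> ('j, 'k) dpoly) \<Rightarrow> bool" where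
  "extends_derivation dk D \<longleftrightarrow>
     (\<forall>p q. D (p + q) = D p + D q) \<and> (\<forall>p q. D (p * q) = p * D q + D p * q) \<and>
     (\<forall>c. D (dConst c) = dConst (dk c)) \<and> (\<forall>j r. D (dVar (j, r)) = dVar (j, Suc r))"

definition prime_diff_ideal :: "(('j, 'k::comm_ring_1) dpoly \<Rightarrow> ('j, 'k) dpoly) \<Rightarrow> ('j, 'k) dpoly set \<Rightarrow> bool" where
  "prime_diff_ideal D P \<longleftrightarrow> prime_ideal_in UNIV P \<and> (\<forall>p \<in> P. D p \<in> P)"

end

theory Submission
  imports Defs "HOL-Library.Countable" "HOL-Library.Product_Lexorder"
begin

text \<open>Choose, among all characteristic sets of P, one that is minimal for the lexicographic
  order on the sequence of pairs (degree of C_i over k[V_i]/(P \<inter> k[V_i]), number of terms of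
  C_i), where V_i is the set of variables of C_0, ..., C_(i-1). Pseudo-division together with the
  minimality of characteristic sets shows that the saturation (C_0, ..., C_(i-1)) : I_i^\<infinity> is the
  prime ideal P \<inter> k[V_i], and that any element of P in k[V_(i+1)] which is reduced with respect to
  C_0, ..., C_(i-1) and has the rank of C_i may replace C_i. In a factorisation of C_i over the
  fraction field of the domain k[V_i]/(P \<inter> k[V_i]) one factor lies in P; as degrees add over a
  domain, this factor would be a replacement of smaller degree unless the other factor is a unit.
  Likewise, a derivative of C_i with respect to a variable outside V_i that lies in P would be a
  replacement of smaller degree.\<close>

abbreviation lookup where "lookup \<equiv> Poly_Mapping.lookup"
abbreviation keys where "keys \<equiv> Poly_Mapping.keys"
abbreviation single where "single \<equiv> Poly_Mapping.single"

section \<open>Monomials, variables and degrees\<close>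

lemma keys_add_nat: "keys (a + b :: 'a \<Rightarrow>\<^sub>0 nat) = keys a \<union> keys b"
  by (auto simp: in_keys_iff lookup_add)

lemma poly_sum_single: "p = (\<Sum>b\<in>keys p. single b (lookup p b))"
  by (rule poly_mapping_eqI) (auto simp: lookup_sum lookup_single when_def in_keys_iff
      sum.delta[OF finite_keys] intro: sum.neutral)

lemma sum_single_induct:
  fixes f :: "'a \<Rightarrow> 'b::comm_monoid_add"
  assumes "P 0" "\<And>m c p. P p \<Longrightarrow> P (single m c + p)" "finite A"
  shows "P (\<Sum>b\<in>A. single b (f b))"
  using assms(3)
proof (induction A rule: finite_induct)
  case empty then show ?case using assms by simp
next
  case (insert x F) then show ?case using assms by (simp add: sum.insert)
qed

lemma poly_induct:
  fixes p :: "'a \<Rightarrow>\<^sub>0 'b::comm_monoid_add"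
  assumes "P 0" "\<And>m c p. P p \<Longrightarrow> P (single m c + p)"
  shows "P p"
  using sum_single_induct[of P, OF assms, of "keys p" "lookup p"] poly_sum_single[of p] by simp

lemma lookup_single_mult:
  fixes p :: "('a::cancel_comm_monoid_add) \<Rightarrow>\<^sub>0 ('b::comm_semiring_1)"
  shows "lookup (single a x * p) m = (if \<exists>d. m = a + d then x * lookup p (m - a) else 0)"
proof (induction p rule: poly_induct)
  case 1 then show ?case by simp
next
  case (2 n c p)
  have "lookup (single a x * single n c) m = (if \<exists>d. m = a + d then x * lookup (single n c) (m - a) else 0)"
  proof (cases "a + n = m")
    case True then show ?thesis by (auto simp: mult_single lookup_single when_def)
  next
    case False
    have "lookup (single n c) (m - a) = 0" if "m = a + d" for d
      using False that by (auto simp: lookup_single when_def)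
    then show ?thesis using False by (auto simp: mult_single lookup_single when_def)
  qed
  then show ?case using 2 by (simp add: distrib_left lookup_add distrib_left)
qed

lemma lookup_mult_single:
  fixes p :: "('a::cancel_comm_monoid_add) \<Rightarrow>\<^sub>0 ('b::comm_semiring_1)"
  shows "lookup (p * single a x) m = (if \<exists>d. m = a + d then x * lookup p (m - a) else 0)"
  by (subst mult.commute) (rule lookup_single_mult)

lemma dvars_zero[simp]: "dvars 0 = {}" by (simp add: dvars_def)

lemma dvars_add: "dvars (p + q) \<subseteq> dvars p \<union> dvars q"
  using keys_add[of p q] by (auto simp: dvars_def)

lemma dvars_uminus[simp]: "dvars (- p) = dvars p"
  by (simp add: dvars_def keys_minus)

lemma keys_diff_subset: "keys (p - q) \<subseteq> keys p \<union> keys q"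
  by (auto simp: in_keys_iff lookup_minus)

lemma dvars_diff: "dvars (p - q) \<subseteq> dvars p \<union> dvars q"
  using keys_diff_subset[of p q] by (auto simp: dvars_def)

lemma dvars_mult: "dvars (p * q) \<subseteq> dvars p \<union> dvars q"
  using keys_mult[of p q] by (force simp: dvars_def keys_add_nat)

lemma dvars_single: "dvars (single m c) \<subseteq> keys m"
  by (auto simp: dvars_def)

lemma dvars_one[simp]: "dvars (1::('j,'k::comm_ring_1) dpoly) = {}"
  by (simp add: dvars_def)

lemma dvars_dVar: "dvars (dVar v :: ('j,'k::comm_ring_1) dpoly) = {v}"
  by (simp add: dvars_def dVar_def)

lemma dvars_power: "dvars (p ^ n) \<subseteq> dvars p"
  by (induction n) (use dvars_mult in auto)

lemma dvars_prod_list: "dvars (prod_list xs) \<subseteq> (\<Union>x\<in>set xs. dvars x)"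
  by (induction xs) (use dvars_mult in auto)

lemma polys_in_add: "p \<in> polys_in W \<Longrightarrow> q \<in> polys_in W \<Longrightarrow> p + q \<in> polys_in W"
  using dvars_add[of p q] by (auto simp: polys_in_def)
lemma polys_in_diff: "p \<in> polys_in W \<Longrightarrow> q \<in> polys_in W \<Longrightarrow> p - q \<in> polys_in W"
  using dvars_diff[of p q] by (auto simp: polys_in_def)
lemma polys_in_mult: "p \<in> polys_in W \<Longrightarrow> q \<in> polys_in W \<Longrightarrow> p * q \<in> polys_in W"
  using dvars_mult[of p q] by (auto simp: polys_in_def)
lemma polys_in_uminus: "p \<in> polys_in W \<Longrightarrow> - p \<in> polys_in W"
  by (auto simp: polys_in_def)
lemma polys_in_zero[simp]: "0 \<in> polys_in W" by (simp add: polys_in_def)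
lemma polys_in_one[simp]: "1 \<in> polys_in W" by (simp add: polys_in_def)
lemma polys_in_mono: "p \<in> polys_in V \<Longrightarrow> V \<subseteq> W \<Longrightarrow> p \<in> polys_in W"
  by (auto simp: polys_in_def)
lemma polys_in_power: "p \<in> polys_in W \<Longrightarrow> p ^ n \<in> polys_in W"
  using dvars_power[of p n] by (auto simp: polys_in_def)
lemma polys_in_prod_list: "set xs \<subseteq> polys_in W \<Longrightarrow> prod_list xs \<in> polys_in W"
  using dvars_prod_list[of xs] by (auto simp: polys_in_def)

lemma degv_ge: "m \<in> keys p \<Longrightarrow> lookup m v \<le> degv v p"
  unfolding degv_def by (rule Max_ge) auto

lemma degv_le_iff: "degv v p \<le> n \<longleftrightarrow> (\<forall>m\<in>keys p. lookup m v \<le> n)"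
  unfolding degv_def by (subst Max_le_iff) auto

lemma degv_le: "(\<And>m. m \<in> keys p \<Longrightarrow> lookup m v \<le> n) \<Longrightarrow> degv v p \<le> n"
  using degv_le_iff by blast

lemma degv_attained: "degv v p > 0 \<Longrightarrow> \<exists>m\<in>keys p. lookup m v = degv v p"
proof -
  assume a: "degv v p > 0"
  have "degv v p \<in> insert 0 ((\<lambda>m. lookup m v) ` keys p)"
    unfolding degv_def by (rule Max_in) auto
  with a show ?thesis by auto
qed

lemma degv_pos_iff: "degv v p > 0 \<longleftrightarrow> v \<in> dvars p"
proof
  assume "degv v p > 0"
  then obtain m where "m \<in> keys p" "lookup m v = degv v p" using degv_attained by blast
  then have "m \<in> keys p" "lookup m v > 0" using \<open>degv v p > 0\<close> by auto
  then show "v \<in> dvars p" by (auto simp: dvars_def in_keys_iff)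
next
  assume "v \<in> dvars p"
  then obtain m where "m \<in> keys p" "v \<in> keys m" by (auto simp: dvars_def)
  then show "degv v p > 0" using degv_ge[of m p v] by (auto simp: in_keys_iff)
qed

lemma degv_notin: "v \<notin> dvars p \<Longrightarrow> degv v p = 0"
  using degv_pos_iff by blast

lemma degv_diff: "degv v (p - q) \<le> max (degv v p) (degv v q)"
proof (rule degv_le)
  fix m assume "m \<in> keys (p - q)"
  then have "m \<in> keys p \<or> m \<in> keys q" using keys_diff_subset[of p q] by blast
  then show "lookup m v \<le> max (degv v p) (degv v q)"
    using degv_ge[of m p v] degv_ge[of m q v] by auto
qed

lemma degv_mult: "degv v (p * q) \<le> degv v p + degv v q"
proof (rule degv_le)
  fix m assume "m \<in> keys (p * q)"
  then obtain a b where "a \<in> keys p" "b \<in> keys q" "m = a + b" using keys_mult[of p q] by blast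
  then show "lookup m v \<le> degv v p + degv v q"
    using degv_ge[of a p v] degv_ge[of b q v] by (simp add: lookup_add)
qed

declare split_paired_All[simp del] split_paired_Ex[simp del]

lemma mon_eq_iff: "(m :: 'a \<Rightarrow>\<^sub>0 nat) = n \<longleftrightarrow> (\<forall>v. lookup m v = lookup n v)"
  by (simp add: poly_mapping_eq_iff fun_eq_iff)

lemma mon_dvd_iff: "(\<exists>d. (m :: 'a \<Rightarrow>\<^sub>0 nat) = a + d) \<longleftrightarrow> (\<forall>v. lookup a v \<le> lookup m v)"
proof
  assume "\<forall>v. lookup a v \<le> lookup m v"
  then have "m = a + (m - a)" by (simp add: mon_eq_iff lookup_add lookup_minus)
  then show "\<exists>d. m = a + d" by blast
qed (auto simp: lookup_add)

lemma lookup_single_if: "lookup (single u d) v = (if u = v then d else 0)"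
  by (simp add: lookup_single when_def)

lemma lookup_coeffv:
  "lookup (coeffv u d p) m = (if lookup m u = 0 then lookup p (m + single u d) else 0)"
proof -
  let ?S = "{m \<in> keys p. lookup m u = d}"
  have eq: "(Poly_Mapping.update u 0 m' = m) \<longleftrightarrow> (lookup m u = 0 \<and> m' = m + single u d)"
    if "m' \<in> ?S" for m'
  proof
    assume a: "Poly_Mapping.update u 0 m' = m"
    have "lookup m u = 0" using a[symmetric] by (simp add: lookup_update)
    moreover have "m' = m + single u d"
    proof (rule poly_mapping_eqI)
      fix w show "lookup m' w = lookup (m + single u d) w"
        using that a[symmetric] by (cases "w = u") (auto simp: lookup_update lookup_add lookup_single_if)
    qed
    ultimately show "lookup m u = 0 \<and> m' = m + single u d" by blast
  next
    assume a: "lookup m u = 0 \<and> m' = m + single u d"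
    show "Poly_Mapping.update u 0 m' = m"
    proof (rule poly_mapping_eqI)
      fix w show "lookup (Poly_Mapping.update u 0 m') w = lookup m w"
        using a by (cases "w = u") (auto simp: lookup_update lookup_add lookup_single_if)
    qed
  qed
  have "lookup (coeffv u d p) m = (\<Sum>m'\<in>?S. (lookup p m' when Poly_Mapping.update u 0 m' = m))"
    by (simp add: coeffv_def lookup_sum lookup_single)
  also have "\<dots> = (\<Sum>m'\<in>?S. if m' = m + single u d then (if lookup m u = 0 then lookup p m' else 0) else 0)"
    by (rule sum.cong) (use eq in \<open>auto simp: when_def\<close>)
  also have "\<dots> = (if m + single u d \<in> ?S then (if lookup m u = 0 then lookup p (m + single u d) else 0) else 0)"
    by (rule sum.delta) simp
  also have "\<dots> = (if lookup m u = 0 then lookup p (m + single u d) else 0)"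
    by (auto simp: in_keys_iff lookup_add lookup_single_if)
  finally show ?thesis .
qed

lemma lookup_pderivv:
  "lookup (pderivv v p) m = of_nat (lookup m v + 1) * lookup p (m + single v 1)"
proof -
  have eq: "(of_nat (lookup m' v) * lookup p m' when Poly_Mapping.update v (lookup m' v - 1) m' = m) =
            (if m' = m + single v 1 then of_nat (lookup m v + 1) * lookup p m' else 0)" for m'
  proof (cases "lookup m' v = 0")
    case True
    then have "m' \<noteq> m + single v 1" by (auto simp: mon_eq_iff lookup_add lookup_single_if)
    then show ?thesis using True by (simp add: when_def)
  next
    case False
    have "(Poly_Mapping.update v (lookup m' v - 1) m' = m) \<longleftrightarrow> m' = m + single v 1"
    proof
      assume a: "Poly_Mapping.update v (lookup m' v - 1) m' = m"
      show "m' = m + single v 1"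
      proof (rule poly_mapping_eqI)
        fix w show "lookup m' w = lookup (m + single v 1) w"
          using False a[symmetric] by (cases "w = v") (auto simp: lookup_update lookup_add lookup_single_if)
      qed
    next
      assume a: "m' = m + single v 1"
      show "Poly_Mapping.update v (lookup m' v - 1) m' = m"
      proof (rule poly_mapping_eqI)
        fix w show "lookup (Poly_Mapping.update v (lookup m' v - 1) m') w = lookup m w"
          using a by (cases "w = v") (auto simp: lookup_update lookup_add lookup_single_if)
      qed
    qed
    moreover have "m' = m + single v 1 \<Longrightarrow> lookup m' v = lookup m v + 1"
      by (simp add: lookup_add lookup_single_if)
    ultimately show ?thesis by (auto simp: when_def)
  qed
  have "lookup (pderivv v p) m = (\<Sum>m'\<in>keys p. (of_nat (lookup m' v) * lookup p m' when Poly_Mapping.update v (lookup m' v - 1) m' = m))"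
    by (simp add: pderivv_def lookup_sum lookup_single)
  also have "\<dots> = (\<Sum>m'\<in>keys p. if m' = m + single v 1 then of_nat (lookup m v + 1) * lookup p m' else 0)"
    using eq by simp
  also have "\<dots> = (if m + single v 1 \<in> keys p then of_nat (lookup m v + 1) * lookup p (m + single v 1) else 0)"
    by (rule sum.delta) simp
  also have "\<dots> = of_nat (lookup m v + 1) * lookup p (m + single v 1)"
    by (auto simp: in_keys_iff)
  finally show ?thesis .
qed

lemma keys_coeffv: "m \<in> keys (coeffv u d p) \<Longrightarrow> lookup m u = 0 \<and> m + single u d \<in> keys p"
  by (auto simp: in_keys_iff lookup_coeffv split: if_splits)

lemma dvars_coeffv: "dvars (coeffv u d p) \<subseteq> dvars p - {u}"
proof
  fix w assume "w \<in> dvars (coeffv u d p)"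
  then obtain m where m: "m \<in> keys (coeffv u d p)" "w \<in> keys m" by (auto simp: dvars_def)
  from keys_coeffv[OF m(1)] have "lookup m u = 0" "m + single u d \<in> keys p" by auto
  moreover have "w \<in> keys (m + single u d)" using m(2) keys_add_nat[of m "single u d"] by blast
  moreover have "w \<noteq> u" using m(2) \<open>lookup m u = 0\<close> by (auto simp: in_keys_iff)
  ultimately show "w \<in> dvars p - {u}" by (auto simp: dvars_def)
qed

lemma degv_coeffv: "degv w (coeffv u d p) \<le> degv w p"
proof (rule degv_le)
  fix m assume "m \<in> keys (coeffv u d p)"
  from keys_coeffv[OF this] have "m + single u d \<in> keys p" by auto
  from degv_ge[OF this, of w] show "lookup m w \<le> degv w p" by (simp add: lookup_add)
qed

lemma keys_pderivv: "m \<in> keys (pderivv v p) \<Longrightarrow> m + single v 1 \<in> keys p"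
  by (auto simp: in_keys_iff lookup_pderivv)

lemma dvars_pderivv: "dvars (pderivv v p) \<subseteq> dvars p"
proof
  fix w assume "w \<in> dvars (pderivv v p)"
  then obtain m where m: "m \<in> keys (pderivv v p)" "w \<in> keys m" by (auto simp: dvars_def)
  from keys_pderivv[OF m(1)] have "m + single v 1 \<in> keys p" .
  moreover have "w \<in> keys (m + single v 1)" using m(2) keys_add_nat[of m "single v 1"] by blast
  ultimately show "w \<in> dvars p" by (auto simp: dvars_def)
qed

lemma dVar_power: "(dVar u :: ('j,'k::comm_ring_1) dpoly) ^ n = single (single u n) 1"
  by (induction n) (auto simp: dVar_def mult_single simp flip: single_add)

lemma lookup_mult_dVar_power:
  fixes c :: "('j,'k::comm_ring_1) dpoly"
  assumes "u \<notin> dvars c"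
  shows "lookup (c * dVar u ^ n) m = (if lookup m u = n then lookup c (m - single u n) else 0)"
proof -
  have "lookup (c * dVar u ^ n) m = (if \<exists>d. m = single u n + d then lookup c (m - single u n) else 0)"
    by (simp add: dVar_power lookup_mult_single)
  also have "\<dots> = (if lookup m u = n then lookup c (m - single u n) else 0)"
  proof (cases "\<exists>d. m = single u n + d")
    case True
    then obtain d where d: "m = single u n + d" by blast
    then have md: "m - single u n = d" by simp
    show ?thesis
    proof (cases "lookup m u = n")
      case False
      then have "lookup d u \<noteq> 0" using d by (simp add: lookup_add lookup_single_if)
      have "d \<notin> keys c"
      proof
        assume "d \<in> keys c"
        moreover have "u \<in> keys d" using \<open>lookup d u \<noteq> 0\<close> by (simp add: in_keys_iff)
        ultimately show False using assms by (auto simp: dvars_def)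
      qed
      then have "lookup c d = 0" by (simp add: in_keys_iff)
      then show ?thesis using True md False by simp
    qed (use True in simp)
  next
    case False
    then have "lookup m u \<noteq> n \<or> True" by simp
    have "lookup m u \<noteq> n"
    proof
      assume "lookup m u = n"
      then have "\<forall>v. lookup (single u n) v \<le> lookup m v" by (simp add: lookup_single_if)
      then show False using False mon_dvd_iff by blast
    qed
    then show ?thesis using False by simp
  qed
  finally show ?thesis .
qed

lemma poly_degv_decomp:
  fixes p :: "('j,'k::comm_ring_1) dpoly" and u
  defines "n \<equiv> degv u p"
  shows "\<exists>low. p = coeffv u n p * dVar u ^ n + low \<and> (\<forall>m\<in>keys low. lookup m u < n)"
proof -
  define low where "low = p - coeffv u n p * dVar u ^ n"
  have uc: "u \<notin> dvars (coeffv u n p)" using dvars_coeffv by blast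
  have "\<forall>m\<in>keys low. lookup m u < n"
  proof
    fix m assume m: "m \<in> keys low"
    have le: "lookup m u \<le> n"
    proof (rule ccontr)
      assume "\<not> lookup m u \<le> n"
      then have "lookup p m = 0" using degv_ge[of m p u] n_def by (auto simp: in_keys_iff)
      then show False using m \<open>\<not> lookup m u \<le> n\<close>
        by (auto simp: low_def in_keys_iff lookup_minus lookup_mult_dVar_power[OF uc])
    qed
    have "lookup m u \<noteq> n"
    proof
      assume e: "lookup m u = n"
      have "m - single u n + single u n = m"
        using e by (simp add: mon_eq_iff lookup_add lookup_minus lookup_single_if)
      moreover have "lookup (m - single u n) u = 0" using e by (simp add: lookup_minus lookup_single_if)
      ultimately have "lookup low m = 0"
        using e by (simp add: low_def lookup_minus lookup_mult_dVar_power[OF uc] lookup_coeffv)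
      then show False using m by (simp add: in_keys_iff)
    qed
    then show "lookup m u < n" using le by simp
  qed
  then show ?thesis unfolding low_def by (intro exI[of _ low]) (simp add: low_def)
qed

lemma dvars_dVar_power: "dvars ((dVar u :: ('j,'k::comm_ring_1) dpoly) ^ n) \<subseteq> {u}"
  using dvars_power[of "dVar u" n] dvars_dVar[of u] by auto

section \<open>Polynomials over k[V]\<close>

text \<open>A polynomial p is viewed as a polynomial over k[V] in the remaining variables:
  outer V m is the part of the monomial m outside V, and vcoeff V p a the coefficient (in k[V]) of
  the outer monomial a.\<close>

definition outer :: "'a set \<Rightarrow> ('a \<Rightarrow>\<^sub>0 nat) \<Rightarrow> ('a \<Rightarrow>\<^sub>0 nat)" where
  "outer V m = Abs_poly_mapping (\<lambda>v. if v \<in> V then 0 else lookup m v)"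

lemma lookup_outer: "lookup (outer V m) v = (if v \<in> V then 0 else lookup m v)"
proof -
  have "{v. (if v \<in> V then 0 else lookup m v) \<noteq> 0} \<subseteq> keys m"
  proof
    fix x assume "x \<in> {v. (if v \<in> V then 0 else lookup m v) \<noteq> 0}"
    then have "lookup m x \<noteq> 0" by (cases "x \<in> V") auto
    then show "x \<in> keys m" by (simp add: in_keys_iff)
  qed
  then have "finite {v. (if v \<in> V then 0 else lookup m v) \<noteq> 0}"
    by (rule finite_subset[OF _ finite_keys])
  then show ?thesis by (simp add: outer_def)
qed

lemma keys_outer: "keys (outer V m) = keys m - V"
proof (rule set_eqI)
  fix x show "x \<in> keys (outer V m) \<longleftrightarrow> x \<in> keys m - V"
    by (cases "x \<in> V") (auto simp: in_keys_iff lookup_outer)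
qed

lemma outer_add: "outer V (a + b) = outer V a + outer V b"
  by (rule poly_mapping_eqI) (simp add: lookup_outer lookup_add)

lemma outer_eq_zero: "keys m \<subseteq> V \<Longrightarrow> outer V m = 0"
  by (rule poly_mapping_eqI) (auto simp: lookup_outer in_keys_iff)

lemma outer_id: "keys a \<inter> V = {} \<Longrightarrow> outer V a = a"
  by (rule poly_mapping_eqI) (auto simp: lookup_outer in_keys_iff)

lemma outer_add_inner: "keys m \<subseteq> V \<Longrightarrow> keys a \<inter> V = {} \<Longrightarrow> outer V (m + a) = a"
  by (simp add: outer_add outer_eq_zero outer_id)

definition vcoeff :: "('j \<times> nat) set \<Rightarrow> ('j, 'k::comm_ring_1) dpoly \<Rightarrow> (('j \<times> nat) \<Rightarrow>\<^sub>0 nat) \<Rightarrow> ('j, 'k) dpoly" where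
  "vcoeff V p a = Abs_poly_mapping (\<lambda>m. if keys m \<subseteq> V then lookup p (m + a) else 0)"

lemma lookup_vcoeff: "lookup (vcoeff V p a) m = (if keys m \<subseteq> V then lookup p (m + a) else 0)"
proof -
  have inj: "inj (\<lambda>m. m + a)" by (rule injI) simp
  have "finite ((\<lambda>m. m + a) -` keys p)" by (rule finite_vimageI[OF finite_keys inj])
  then have "finite {m. (if keys m \<subseteq> V then lookup p (m + a) else 0) \<noteq> 0}"
    by (rule finite_subset[rotated]) (auto simp: in_keys_iff)
  then show ?thesis by (simp add: vcoeff_def)
qed

lemma keys_vcoeff: "m \<in> keys (vcoeff V p a) \<Longrightarrow> keys m \<subseteq> V \<and> m + a \<in> keys p"
  by (auto simp: in_keys_iff lookup_vcoeff split: if_splits)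

lemma vcoeff_polys_in: "vcoeff V p a \<in> polys_in V"
  by (auto simp: polys_in_def dvars_def dest!: keys_vcoeff)

lemma vcoeff_add: "vcoeff V (p + q) a = vcoeff V p a + vcoeff V q a"
  by (rule poly_mapping_eqI) (simp add: lookup_vcoeff lookup_add)
lemma vcoeff_diff: "vcoeff V (p - q) a = vcoeff V p a - vcoeff V q a"
  by (rule poly_mapping_eqI) (simp add: lookup_vcoeff lookup_minus)
lemma vcoeff_zero[simp]: "vcoeff V 0 a = 0"
  by (rule poly_mapping_eqI) (simp add: lookup_vcoeff)
lemma vcoeff_sum: "vcoeff V (sum f A) a = (\<Sum>x\<in>A. vcoeff V (f x) a)"
  by (rule poly_mapping_eqI) (simp add: lookup_vcoeff lookup_sum)

lemma mon_dvd_add_outer_iff: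
  fixes a b m :: "'a \<Rightarrow>\<^sub>0 nat"
  assumes b: "keys b \<subseteq> V" and a: "keys a \<inter> V = {}" and m: "keys m \<subseteq> V"
  shows "(\<exists>d. m + a = b + d) \<longleftrightarrow> (\<exists>d. m = b + d)"
proof -
  have "lookup b v \<le> lookup (m + a) v \<longleftrightarrow> lookup b v \<le> lookup m v" for v
  proof (cases "v \<in> V")
    case True
    then have "lookup a v = 0" using a by (auto simp: in_keys_iff)
    then show ?thesis by (simp add: lookup_add)
  next
    case False
    then have "lookup b v = 0" using b by (auto simp: in_keys_iff)
    then show ?thesis by simp
  qed
  then show ?thesis by (simp add: mon_dvd_iff)
qed

lemma vcoeff_single_mult:
  fixes x :: "'k::comm_ring_1"
  assumes b: "keys b \<subseteq> V" and a: "keys a \<inter> V = {}"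
  shows "vcoeff V (single b x * p) a = single b x * vcoeff V p a"
proof (rule poly_mapping_eqI)
  fix m
  show "lookup (vcoeff V (single b x * p) a) m = lookup (single b x * vcoeff V p a) m"
  proof (cases "keys m \<subseteq> V")
    case True
    note iff = mon_dvd_add_outer_iff[OF b a True]
    show ?thesis
    proof (cases "\<exists>d. m = b + d")
      case True2: True
      then obtain d where d: "m = b + d" by blast
      have "keys (m - b) \<subseteq> V" using d True keys_add_nat[of b d] by auto
      moreover have "m + a - b = m - b + a" using d by (simp add: add.assoc)
      ultimately show ?thesis using True True2 iff by (simp add: lookup_single_mult lookup_vcoeff)
    next
      case False
      then show ?thesis using True iff by (simp add: lookup_single_mult lookup_vcoeff)
    qed
  next
    case False
    then obtain v where v: "v \<in> keys m" "v \<notin> V" by blast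
    have "lookup (vcoeff V p a) (m - b) = 0" if "m = b + d" for d
    proof -
      have "lookup b v = 0" using b v(2) by (auto simp: in_keys_iff)
      then have "v \<in> keys (m - b)" using v(1) by (simp add: in_keys_iff lookup_minus)
      then show ?thesis using v(2) by (auto simp: lookup_vcoeff)
    qed
    then show ?thesis using False by (auto simp: lookup_single_mult lookup_vcoeff)
  qed
qed

lemma vcoeff_mult_inner:
  assumes c: "c \<in> polys_in V" and a: "keys a \<inter> V = {}"
  shows "vcoeff V (c * p) a = c * vcoeff V p a"
proof -
  have "c * p = (\<Sum>b\<in>keys c. single b (lookup c b) * p)"
    by (subst poly_sum_single[of c]) (simp add: sum_distrib_right)
  then have "vcoeff V (c * p) a = (\<Sum>b\<in>keys c. vcoeff V (single b (lookup c b) * p) a)"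
    by (simp add: vcoeff_sum)
  also have "\<dots> = (\<Sum>b\<in>keys c. single b (lookup c b) * vcoeff V p a)"
  proof (rule sum.cong[OF refl])
    fix b assume "b \<in> keys c"
    then have "keys b \<subseteq> V" using c by (auto simp: polys_in_def dvars_def)
    then show "vcoeff V (single b (lookup c b) * p) a = single b (lookup c b) * vcoeff V p a"
      by (rule vcoeff_single_mult[OF _ a])
  qed
  also have "\<dots> = c * vcoeff V p a"
    by (subst (2) poly_sum_single[of c]) (simp add: sum_distrib_right)
  finally show ?thesis .
qed

lemma vcoeff_inner:
  assumes p: "p \<in> polys_in V" and a: "keys a \<inter> V = {}"
  shows "vcoeff V p a = (if a = 0 then p else 0)"
proof (rule poly_mapping_eqI)
  fix m
  show "lookup (vcoeff V p a) m = lookup (if a = 0 then p else 0) m"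
  proof (cases "a = 0")
    case True
    have "lookup p m = 0" if "\<not> keys m \<subseteq> V"
    proof -
      have "m \<notin> keys p" using that p by (auto simp: polys_in_def dvars_def)
      then show ?thesis by (simp add: in_keys_iff)
    qed
    then show ?thesis using True by (auto simp: lookup_vcoeff)
  next
    case False
    then obtain v where v: "v \<in> keys a" by (auto simp: in_keys_iff poly_mapping_eq_iff fun_eq_iff)
    then have "v \<notin> V" using a by auto
    have "m + a \<notin> keys p"
    proof
      assume "m + a \<in> keys p"
      moreover have "v \<in> keys (m + a)" using v keys_add_nat[of m a] by auto
      ultimately show False using p \<open>v \<notin> V\<close> by (auto simp: polys_in_def dvars_def)
    qed
    then show ?thesis using False by (simp add: lookup_vcoeff in_keys_iff)
  qed
qed

lemma vcoeff_eq_zero_if: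
  assumes "\<forall>m\<in>keys p. outer V m \<noteq> a" and a: "keys a \<inter> V = {}"
  shows "vcoeff V p a = 0"
proof (rule poly_mapping_eqI)
  fix m
  have "lookup p (m + a) = 0" if "keys m \<subseteq> V"
  proof -
    have "outer V (m + a) = a" by (rule outer_add_inner[OF that a])
    then have "m + a \<notin> keys p" using assms(1) by blast
    then show ?thesis by (simp add: in_keys_iff)
  qed
  then show "lookup (vcoeff V p a) m = lookup 0 m" by (simp add: lookup_vcoeff)
qed

definition outer_filter :: "('j \<times> nat) set \<Rightarrow> ((('j \<times> nat) \<Rightarrow>\<^sub>0 nat) \<Rightarrow> bool) \<Rightarrow> ('j, 'k::comm_ring_1) dpoly \<Rightarrow> ('j, 'k) dpoly" where
  "outer_filter V Q p = Abs_poly_mapping (\<lambda>m. if Q (outer V m) then lookup p m else 0)"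

lemma lookup_outer_filter: "lookup (outer_filter V Q p) m = (if Q (outer V m) then lookup p m else 0)"
proof -
  have "{m. (if Q (outer V m) then lookup p m else 0) \<noteq> 0} \<subseteq> keys p"
  proof
    fix x assume "x \<in> {m. (if Q (outer V m) then lookup p m else 0) \<noteq> 0}"
    then have "lookup p x \<noteq> 0" by (cases "Q (outer V x)") auto
    then show "x \<in> keys p" by (simp add: in_keys_iff)
  qed
  then have "finite {m. (if Q (outer V m) then lookup p m else 0) \<noteq> 0}"
    by (rule finite_subset[OF _ finite_keys])
  then show ?thesis by (simp add: outer_filter_def)
qed

lemma keys_outer_filter: "m \<in> keys (outer_filter V Q p) \<Longrightarrow> m \<in> keys p \<and> Q (outer V m)"
  by (cases "Q (outer V m)") (auto simp: in_keys_iff lookup_outer_filter)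

lemma dvars_outer_filter: "dvars (outer_filter V Q p) \<subseteq> dvars p"
proof
  fix x assume "x \<in> dvars (outer_filter V Q p)"
  then obtain m where "m \<in> keys (outer_filter V Q p)" "x \<in> keys m" by (auto simp: dvars_def)
  then show "x \<in> dvars p" using keys_outer_filter[of m V Q p] by (auto simp: dvars_def)
qed

lemma outer_filter_split: "outer_filter V Q p + outer_filter V (\<lambda>x. \<not> Q x) p = p"
  by (rule poly_mapping_eqI) (simp add: lookup_add lookup_outer_filter)

lemma vcoeff_outer_filter:
  assumes a: "keys a \<inter> V = {}"
  shows "vcoeff V (outer_filter V Q p) a = (if Q a then vcoeff V p a else 0)"
proof (rule poly_mapping_eqI)
  fix m
  show "lookup (vcoeff V (outer_filter V Q p) a) m = lookup (if Q a then vcoeff V p a else 0) m"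
  proof (cases "keys m \<subseteq> V")
    case True
    then have "outer V (m + a) = a" by (rule outer_add_inner[OF _ a])
    then show ?thesis using True by (simp add: lookup_vcoeff lookup_outer_filter)
  qed (simp add: lookup_vcoeff)
qed

lemma lookup_mult_single_one:
  fixes c :: "('j,'k::comm_ring_1) dpoly"
  shows "lookup (c * single a 1) m = (if \<exists>d. m = a + d then lookup c (m - a) else 0)"
  by (simp add: lookup_mult_single)

lemma outer_eq_iff:
  assumes a: "keys a \<inter> V = {}"
  shows "outer V m = a \<longleftrightarrow> (\<exists>d. keys d \<subseteq> V \<and> m = a + d)"
proof
  assume "outer V m = a"
  moreover have "m = outer V m + (m - outer V m)"
    by (rule poly_mapping_eqI) (simp add: lookup_add lookup_minus lookup_outer)
  moreover have "keys (m - outer V m) \<subseteq> V"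
    by (auto simp: in_keys_iff lookup_minus lookup_outer split: if_splits)
  ultimately show "\<exists>d. keys d \<subseteq> V \<and> m = a + d" by blast
next
  assume "\<exists>d. keys d \<subseteq> V \<and> m = a + d"
  then show "outer V m = a" using outer_add_inner[OF _ a] by (auto simp: add.commute)
qed

lemma outer_filter_eq:
  fixes p :: "('j,'k::comm_ring_1) dpoly"
  assumes a: "keys a \<inter> V = {}"
  shows "outer_filter V (\<lambda>x. x = a) p = vcoeff V p a * single a 1"
proof (rule poly_mapping_eqI)
  fix m
  have "lookup (vcoeff V p a * single a 1) m = (if outer V m = a then lookup p m else 0)"
  proof (cases "outer V m = a")
    case True
    then obtain d where "keys d \<subseteq> V" "m = a + d" using outer_eq_iff[OF a] by blast
    then show ?thesis using True by (auto simp: lookup_mult_single_one lookup_vcoeff add.commute)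
  next
    case False
    then have "\<not> keys d \<subseteq> V" if "m = a + d" for d using that outer_eq_iff[OF a] by blast
    then show ?thesis using False by (auto simp: lookup_mult_single_one lookup_vcoeff)
  qed
  then show "lookup (outer_filter V (\<lambda>x. x = a) p) m = lookup (vcoeff V p a * single a 1) m"
    by (simp add: lookup_outer_filter)
qed

lemma vcoeff_mult_single_self:
  assumes c: "c \<in> polys_in V" and a: "keys a \<inter> V = {}"
  shows "vcoeff V (c * single a 1) a = c"
proof -
  have "vcoeff V (single a (1::'b::comm_ring_1)) a = (1::('a,'b) dpoly)"
  proof (rule poly_mapping_eqI)
    fix m
    show "lookup (vcoeff V (single a (1::'b)) a) m = lookup (1::('a,'b) dpoly) m"
      by (auto simp: lookup_vcoeff lookup_single_if lookup_single when_def lookup_one)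
  qed
  then show ?thesis by (simp add: vcoeff_mult_inner[OF c a])
qed

lemma poly_outer_decomp:
  fixes p :: "('j,'k::comm_ring_1) dpoly"
  shows "p = (\<Sum>g\<in>outer V ` keys p. vcoeff V p g * single g 1)"
proof -
  have "p = (\<Sum>g\<in>outer V ` keys p. outer_filter V (\<lambda>x. x = g) p)"
  proof (rule poly_mapping_eqI)
    fix m
    have "(\<Sum>g\<in>outer V ` keys p. lookup (outer_filter V (\<lambda>x. x = g) p) m)
        = (\<Sum>g\<in>outer V ` keys p. if g = outer V m then lookup p m else 0)"
      by (rule sum.cong) (auto simp: lookup_outer_filter)
    also have "\<dots> = lookup p m"
      by (subst sum.delta) (auto simp: in_keys_iff)
    finally show "lookup p m = lookup (\<Sum>g\<in>outer V ` keys p. outer_filter V (\<lambda>x. x = g) p) m"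
      by (simp add: lookup_sum)
  qed
  also have "\<dots> = (\<Sum>g\<in>outer V ` keys p. vcoeff V p g * single g 1)"
    by (rule sum.cong[OF refl]) (auto intro!: outer_filter_eq simp: keys_outer)
  finally show ?thesis .
qed

lemma ideal_in_alt:
  "p \<in> ideal_in W S \<longleftrightarrow> (\<exists>xs. set (map fst xs) \<subseteq> polys_in W \<and> set (map snd xs) \<subseteq> S \<and>
      p = sum_list (map (\<lambda>(a, s). a * s) xs))"
proof
  assume "p \<in> ideal_in W S"
  then obtain as ss where h: "length as = length ss" "set as \<subseteq> polys_in W" "set ss \<subseteq> S"
      "p = sum_list (map2 (*) as ss)" by (auto simp: ideal_in_def)
  show "\<exists>xs. set (map fst xs) \<subseteq> polys_in W \<and> set (map snd xs) \<subseteq> S \<and>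
      p = sum_list (map (\<lambda>(a, s). a * s) xs)"
    by (rule exI[of _ "zip as ss"]) (use h in auto)
next
  assume "\<exists>xs. set (map fst xs) \<subseteq> polys_in W \<and> set (map snd xs) \<subseteq> S \<and>
      p = sum_list (map (\<lambda>(a, s). a * s) xs)"
  then obtain xs where h: "set (map fst xs) \<subseteq> polys_in W" "set (map snd xs) \<subseteq> S"
      "p = sum_list (map (\<lambda>(a, s). a * s) xs)" by blast
  show "p \<in> ideal_in W S"
    unfolding ideal_in_def
    by (rule CollectI, rule exI[of _ "map fst xs"], rule exI[of _ "map snd xs"]) (use h in \<open>simp add: zip_map_fst_snd\<close>)
qed

lemma ideal_in_zero: "0 \<in> ideal_in W S"
  unfolding ideal_in_alt by (rule exI[of _ "[]"]) simp

lemma ideal_in_add: "p \<in> ideal_in W S \<Longrightarrow> q \<in> ideal_in W S \<Longrightarrow> p + q \<in> ideal_in W S"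
proof -
  assume "p \<in> ideal_in W S" "q \<in> ideal_in W S"
  then obtain xs ys where
    "set (map fst xs) \<subseteq> polys_in W" "set (map snd xs) \<subseteq> S" "p = sum_list (map (\<lambda>(a, s). a * s) xs)"
    "set (map fst ys) \<subseteq> polys_in W" "set (map snd ys) \<subseteq> S" "q = sum_list (map (\<lambda>(a, s). a * s) ys)"
    unfolding ideal_in_alt by blast
  then show ?thesis unfolding ideal_in_alt by (intro exI[of _ "xs @ ys"]) auto
qed

lemma ideal_in_mult: "r \<in> polys_in W \<Longrightarrow> p \<in> ideal_in W S \<Longrightarrow> r * p \<in> ideal_in W S"
proof -
  assume r: "r \<in> polys_in W" and "p \<in> ideal_in W S"
  then obtain xs where h:
    "set (map fst xs) \<subseteq> polys_in W" "set (map snd xs) \<subseteq> S" "p = sum_list (map (\<lambda>(a, s). a * s) xs)"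
    unfolding ideal_in_alt by blast
  let ?ys = "map (\<lambda>(a, s). (r * a, s)) xs"
  have "set (map fst ?ys) \<subseteq> polys_in W" using h(1) r by (auto intro!: polys_in_mult simp: image_subset_iff)
  moreover have "set (map snd ?ys) \<subseteq> S" using h(2) by auto
  moreover have "r * p = sum_list (map (\<lambda>(a, s). a * s) ?ys)"
    unfolding h(3) by (induction xs) (auto simp: algebra_simps)
  ultimately show ?thesis unfolding ideal_in_alt by blast
qed

lemma ideal_in_gen: "a \<in> polys_in W \<Longrightarrow> s \<in> S \<Longrightarrow> a * s \<in> ideal_in W S"
  unfolding ideal_in_alt by (rule exI[of _ "[(a, s)]"]) simp

lemma ideal_in_sum: "(\<And>x. x \<in> A \<Longrightarrow> f x \<in> ideal_in W S) \<Longrightarrow> sum f A \<in> ideal_in W S"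
proof (induction A rule: infinite_finite_induct)
  case (infinite A) then show ?case by (simp add: ideal_in_zero)
next
  case empty then show ?case by (simp add: ideal_in_zero)
next
  case (insert x F) then show ?case by (simp add: ideal_in_add)
qed

lemma ideal_in_mono: "S \<subseteq> S' \<Longrightarrow> p \<in> ideal_in W S \<Longrightarrow> p \<in> ideal_in W S'"
  unfolding ideal_in_alt by blast

lemma ideal_in_polys: "S \<subseteq> polys_in W \<Longrightarrow> p \<in> ideal_in W S \<Longrightarrow> p \<in> polys_in W"
proof -
  assume S: "S \<subseteq> polys_in W" and "p \<in> ideal_in W S"
  then obtain xs where h:
    "set (map fst xs) \<subseteq> polys_in W" "set (map snd xs) \<subseteq> S" "p = sum_list (map (\<lambda>(a, s). a * s) xs)"
    unfolding ideal_in_alt by blast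
  have "sum_list (map (\<lambda>(a, s). a * s) xs) \<in> polys_in W"
    using h(1,2) S by (induction xs) (auto intro!: polys_in_add polys_in_mult)
  then show ?thesis using h(3) by simp
qed

lemma ideal_in_sub_ideal:
  assumes "0 \<in> I" "\<And>a b. a \<in> I \<Longrightarrow> b \<in> I \<Longrightarrow> a + b \<in> I" "\<And>a r. a \<in> I \<Longrightarrow> r * a \<in> I" "S \<subseteq> I"
  shows "ideal_in W S \<subseteq> I"
proof
  fix p assume "p \<in> ideal_in W S"
  then obtain xs where h:
    "set (map snd xs) \<subseteq> S" "p = sum_list (map (\<lambda>(a, s). a * s) xs)"
    unfolding ideal_in_alt by blast
  have "sum_list (map (\<lambda>(a, s). a * s) xs) \<in> I"
    using h(1) by (induction xs) (auto intro!: assms(2,3) assms(1) dest: subsetD[OF assms(4)])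
  then show "p \<in> I" using h(2) by simp
qed

definition is_ideal_in :: "('j \<times> nat) set \<Rightarrow> ('j, 'k::comm_ring_1) dpoly set \<Rightarrow> bool" where
  "is_ideal_in V J \<longleftrightarrow> J \<subseteq> polys_in V \<and> 0 \<in> J \<and> (\<forall>a\<in>J. \<forall>b\<in>J. a + b \<in> J) \<and>
     (\<forall>a\<in>J. \<forall>r\<in>polys_in V. r * a \<in> J)"

definition coeffs_in :: "('j \<times> nat) set \<Rightarrow> ('j, 'k::comm_ring_1) dpoly set \<Rightarrow> ('j, 'k) dpoly \<Rightarrow> bool" where
  "coeffs_in V J p \<longleftrightarrow> (\<forall>g. keys g \<inter> V = {} \<longrightarrow> vcoeff V p g \<in> J)"

text \<open>The support of p as a polynomial over k[V]/J.\<close>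

definition supp_mod :: "('j \<times> nat) set \<Rightarrow> ('j, 'k::comm_ring_1) dpoly set \<Rightarrow> ('j, 'k) dpoly \<Rightarrow> (('j \<times> nat) \<Rightarrow>\<^sub>0 nat) set" where
  "supp_mod V J p = {g. keys g \<inter> V = {} \<and> vcoeff V p g \<notin> J}"

lemma prime_ideal_in_is_ideal_in: "prime_ideal_in V J \<Longrightarrow> is_ideal_in V J"
  by (simp add: prime_ideal_in_def is_ideal_in_def)

lemma prime_ideal_inD:
  "prime_ideal_in V J \<Longrightarrow> a \<in> polys_in V \<Longrightarrow> b \<in> polys_in V \<Longrightarrow> a * b \<in> J \<Longrightarrow> a \<in> J \<or> b \<in> J"
  by (simp add: prime_ideal_in_def)

lemma is_ideal_in_subset: "is_ideal_in V J \<Longrightarrow> J \<subseteq> polys_in V" by (simp add: is_ideal_in_def)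
lemma is_ideal_in_zero: "is_ideal_in V J \<Longrightarrow> 0 \<in> J" by (simp add: is_ideal_in_def)
lemma is_ideal_in_add: "is_ideal_in V J \<Longrightarrow> a \<in> J \<Longrightarrow> b \<in> J \<Longrightarrow> a + b \<in> J" by (simp add: is_ideal_in_def)
lemma is_ideal_in_mult: "is_ideal_in V J \<Longrightarrow> a \<in> J \<Longrightarrow> r \<in> polys_in V \<Longrightarrow> r * a \<in> J" by (simp add: is_ideal_in_def)
lemma is_ideal_in_uminus: "is_ideal_in V J \<Longrightarrow> a \<in> J \<Longrightarrow> - a \<in> J"
  using is_ideal_in_mult[of V J a "-1"] by (simp add: polys_in_uminus)
lemma is_ideal_in_diff: "is_ideal_in V J \<Longrightarrow> a \<in> J \<Longrightarrow> b \<in> J \<Longrightarrow> a - b \<in> J"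
  using is_ideal_in_add[of V J a "- b"] is_ideal_in_uminus[of V J b] by simp

lemma coeffs_in_add: "is_ideal_in V J \<Longrightarrow> coeffs_in V J p \<Longrightarrow> coeffs_in V J q \<Longrightarrow> coeffs_in V J (p + q)"
  by (simp add: coeffs_in_def vcoeff_add is_ideal_in_add)
lemma coeffs_in_zero: "is_ideal_in V J \<Longrightarrow> coeffs_in V J 0"
  by (simp add: coeffs_in_def is_ideal_in_zero)

lemma coeffs_in_gen: "is_ideal_in V J \<Longrightarrow> s \<in> J \<Longrightarrow> coeffs_in V J (a * s)"
proof -
  assume I: "is_ideal_in V J" and s: "s \<in> J"
  have sV: "s \<in> polys_in V" using I s by (auto simp: is_ideal_in_def)
  show ?thesis unfolding coeffs_in_def
  proof (intro allI impI)
    fix g :: "_ \<Rightarrow>\<^sub>0 nat" assume g: "keys g \<inter> V = {}"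
    have "vcoeff V (a * s) g = vcoeff V a g * s"
      using vcoeff_mult_inner[OF sV g, of a] by (simp add: mult.commute)
    moreover have "vcoeff V a g * s \<in> J" by (rule is_ideal_in_mult[OF I s vcoeff_polys_in])
    ultimately show "vcoeff V (a * s) g \<in> J" by simp
  qed
qed

lemma ideal_in_char:
  assumes I: "is_ideal_in V J" and VW: "V \<subseteq> W"
  shows "p \<in> ideal_in W J \<longleftrightarrow> p \<in> polys_in W \<and> coeffs_in V J p"
proof
  assume p: "p \<in> ideal_in W J"
  have JW: "J \<subseteq> polys_in W" using is_ideal_in_subset[OF I] polys_in_mono[OF _ VW] by blast
  have "p \<in> polys_in W" by (rule ideal_in_polys[OF JW p])
  moreover
  obtain xs where h: "set (map snd xs) \<subseteq> J" "p = sum_list (map (\<lambda>(a, s). a * s) xs)"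
    using p unfolding ideal_in_alt by blast
  have "coeffs_in V J (sum_list (map (\<lambda>(a, s). a * s) xs))"
    using h(1) by (induction xs) (auto intro!: coeffs_in_add coeffs_in_gen coeffs_in_zero I)
  ultimately show "p \<in> polys_in W \<and> coeffs_in V J p" using h(2) by simp
next
  assume h: "p \<in> polys_in W \<and> coeffs_in V J p"
  have dec: "p = (\<Sum>g\<in>outer V ` keys p. vcoeff V p g * single g 1)" by (rule poly_outer_decomp)
  have "vcoeff V p g * single g 1 \<in> ideal_in W J" if gin: "g \<in> outer V ` keys p" for g
  proof -
    obtain m where m: "m \<in> keys p" "g = outer V m" using gin by blast
    have gV: "keys g \<inter> V = {}" using m by (auto simp: keys_outer)
    have "keys g \<subseteq> W" using m h by (auto simp: keys_outer polys_in_def dvars_def)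
    then have "single g 1 \<in> polys_in W" using dvars_single[of g 1] by (auto simp: polys_in_def)
    moreover have "vcoeff V p g \<in> J" using h gV by (simp add: coeffs_in_def)
    ultimately show ?thesis using ideal_in_gen[of "single g 1" W "vcoeff V p g" J] by (simp add: mult.commute)
  qed
  then have "(\<Sum>g\<in>outer V ` keys p. vcoeff V p g * single g 1) \<in> ideal_in W J"
    by (rule ideal_in_sum)
  then show "p \<in> ideal_in W J" using dec by simp
qed

lemma supp_mod_subset: "is_ideal_in V J \<Longrightarrow> supp_mod V J p \<subseteq> outer V ` keys p"
proof
  fix g assume I: "is_ideal_in V J" and g: "g \<in> supp_mod V J p"
  then have gV: "keys g \<inter> V = {}" and "vcoeff V p g \<noteq> 0"
    using is_ideal_in_zero[OF I] by (auto simp: supp_mod_def)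
  then obtain m where "m \<in> keys (vcoeff V p g)" by (auto simp: poly_mapping_eq_iff fun_eq_iff in_keys_iff)
  then have "keys m \<subseteq> V" "m + g \<in> keys p" using keys_vcoeff by blast+
  moreover have "outer V (m + g) = g" by (rule outer_add_inner[OF \<open>keys m \<subseteq> V\<close> gV])
  ultimately show "g \<in> outer V ` keys p" by (metis image_eqI)
qed

lemma supp_mod_finite: "is_ideal_in V J \<Longrightarrow> finite (supp_mod V J p)"
  using finite_subset[OF supp_mod_subset finite_imageI[OF finite_keys]] by blast

lemma coeffs_in_iff_supp_mod_empty: "coeffs_in V J p \<longleftrightarrow> supp_mod V J p = {}"
  by (auto simp: coeffs_in_def supp_mod_def)

lemma supp_mod_cong:
  assumes I: "is_ideal_in V J" and d: "coeffs_in V J (p - q)"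
  shows "supp_mod V J p = supp_mod V J q"
proof -
  have "vcoeff V p g \<in> J \<longleftrightarrow> vcoeff V q g \<in> J" if "keys g \<inter> V = {}" for g
  proof -
    have dd: "vcoeff V p g - vcoeff V q g \<in> J" using d that by (simp add: coeffs_in_def vcoeff_diff)
    show ?thesis
    proof
      assume "vcoeff V p g \<in> J"
      then have "vcoeff V p g - (vcoeff V p g - vcoeff V q g) \<in> J" by (rule is_ideal_in_diff[OF I _ dd])
      then show "vcoeff V q g \<in> J" by simp
    next
      assume "vcoeff V q g \<in> J"
      then have "(vcoeff V p g - vcoeff V q g) + vcoeff V q g \<in> J" by (rule is_ideal_in_add[OF I dd])
      then show "vcoeff V p g \<in> J" by simp
    qed
  qed
  then show ?thesis by (auto simp: supp_mod_def)
qed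

lemma supp_mod_mult_inner:
  assumes P: "prime_ideal_in V J" and c: "c \<in> polys_in V" "c \<notin> J"
  shows "supp_mod V J (c * p) = supp_mod V J p"
proof -
  have I: "is_ideal_in V J" using P by (rule prime_ideal_in_is_ideal_in)
  have "vcoeff V (c * p) g \<in> J \<longleftrightarrow> vcoeff V p g \<in> J" if g: "keys g \<inter> V = {}" for g
  proof -
    have e: "vcoeff V (c * p) g = c * vcoeff V p g" by (rule vcoeff_mult_inner[OF c(1) g])
    show ?thesis
    proof
      assume "vcoeff V (c * p) g \<in> J"
      then have "c * vcoeff V p g \<in> J" using e by simp
      then show "vcoeff V p g \<in> J" using prime_ideal_inD[OF P c(1) vcoeff_polys_in[of V p g]] c(2) by blast
    next
      assume "vcoeff V p g \<in> J"
      then show "vcoeff V (c * p) g \<in> J" using e is_ideal_in_mult[OF I _ c(1)] by simp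
    qed
  qed
  then show ?thesis by (auto simp: supp_mod_def)
qed

section \<open>A monomial order and the domain property\<close>

definition mon_code :: "('a::countable \<Rightarrow>\<^sub>0 nat) \<Rightarrow> (nat \<Rightarrow>\<^sub>0 nat)" where
  "mon_code a = Abs_poly_mapping (\<lambda>n. if n \<in> range (to_nat :: 'a \<Rightarrow> nat) then lookup a (from_nat n) else 0)"

lemma lookup_mon_code:
  fixes a :: "'a::countable \<Rightarrow>\<^sub>0 nat"
  shows "lookup (mon_code a) n = (if n \<in> range (to_nat :: 'a \<Rightarrow> nat) then lookup a (from_nat n) else 0)"
proof -
  have "{n. (if n \<in> range (to_nat :: 'a \<Rightarrow> nat) then lookup a (from_nat n) else 0) \<noteq> 0} \<subseteq> to_nat ` keys a"
  proof
    fix n assume "n \<in> {n. (if n \<in> range (to_nat :: 'a \<Rightarrow> nat) then lookup a (from_nat n) else 0) \<noteq> 0}"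
    then have "n \<in> range (to_nat :: 'a \<Rightarrow> nat)" "lookup a (from_nat n) \<noteq> 0" by (auto split: if_split_asm)
    then show "n \<in> to_nat ` keys a" by (auto simp: in_keys_iff)
  qed
  then have "finite {n. (if n \<in> range (to_nat :: 'a \<Rightarrow> nat) then lookup a (from_nat n) else 0) \<noteq> 0}"
    by (rule finite_subset) simp
  then show ?thesis by (simp add: mon_code_def)
qed

lemma mon_code_add: "mon_code (a + b) = mon_code a + mon_code b"
  by (rule poly_mapping_eqI) (simp add: lookup_mon_code lookup_add)

lemma mon_code_inj:
  fixes a b :: "'a::countable \<Rightarrow>\<^sub>0 nat"
  assumes "mon_code a = mon_code b" shows "a = b"
proof (rule poly_mapping_eqI)
  fix v :: 'a
  from assms have "lookup (mon_code a) (to_nat v) = lookup (mon_code b) (to_nat v)" by simp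
  then show "lookup a v = lookup b v" by (simp add: lookup_mon_code)
qed

text \<open>A linear order on monomials refining the weight w.\<close>

definition mon_key :: "(('a::countable \<Rightarrow>\<^sub>0 nat) \<Rightarrow> nat) \<Rightarrow> ('a \<Rightarrow>\<^sub>0 nat) \<Rightarrow> nat \<times> (nat \<Rightarrow>\<^sub>0 nat)" where
  "mon_key w a = (w a, mon_code a)"

definition additive :: "(('a \<Rightarrow>\<^sub>0 nat) \<Rightarrow> nat) \<Rightarrow> bool" where
  "additive w \<longleftrightarrow> (\<forall>a b. w (a + b) = w a + w b)"

lemma mon_key_inj: "mon_key w a = mon_key w b \<Longrightarrow> a = b"
  by (auto simp: mon_key_def intro: mon_code_inj)

lemma mon_key_less_add:
  assumes "additive w" "mon_key w a < mon_key w b"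
  shows "mon_key w (a + c) < mon_key w (b + c)"
proof -
  have "w a < w b \<or> (w a = w b \<and> mon_code a < mon_code b)" using assms(2) by (auto simp: mon_key_def less_prod_def)
  then show ?thesis using assms(1)
    by (auto simp: mon_key_def less_prod_def additive_def mon_code_add intro: add_strict_right_mono)
qed

lemma mon_key_less_add_left:
  assumes "additive w" "mon_key w a < mon_key w b"
  shows "mon_key w (c + a) < mon_key w (c + b)"
  using mon_key_less_add[OF assms, of c] by (simp add: add.commute)

lemma mon_key_le_lt_add:
  assumes w: "additive w" and "mon_key w a \<le> mon_key w a0" "mon_key w b < mon_key w b0"
  shows "mon_key w (a + b) < mon_key w (a0 + b0)"
proof (cases "a = a0")
  case True then show ?thesis using mon_key_less_add_left[OF w assms(3)] by simp
next
  case False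
  then have "mon_key w a < mon_key w a0" using assms(2) mon_key_inj[of w a a0] by (metis order_le_less)
  then have "mon_key w (a + b) < mon_key w (a0 + b)" by (rule mon_key_less_add[OF w])
  also have "mon_key w (a0 + b) < mon_key w (a0 + b0)" by (rule mon_key_less_add_left[OF w assms(3)])
  finally show ?thesis .
qed

lemma mon_key_lt_le_add:
  assumes w: "additive w" and "mon_key w a < mon_key w a0" "mon_key w b \<le> mon_key w b0"
  shows "mon_key w (a + b) < mon_key w (a0 + b0)"
  using mon_key_le_lt_add[OF w assms(3,2)] by (simp add: add.commute)

lemma keys_mult_mon_key_less:
  fixes A B :: "('j::countable, 'k::comm_ring_1) dpoly"
  assumes w: "additive w"
    and A: "\<forall>m\<in>keys A. mon_key w (outer V m) \<le> mon_key w a0"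
    and B: "\<forall>m\<in>keys B. mon_key w (outer V m) \<le> mon_key w b0"
    and strict: "(\<forall>m\<in>keys A. mon_key w (outer V m) < mon_key w a0) \<or> (\<forall>m\<in>keys B. mon_key w (outer V m) < mon_key w b0)"
  shows "\<forall>m\<in>keys (A * B). mon_key w (outer V m) < mon_key w (a0 + b0)"
proof
  fix m assume "m \<in> keys (A * B)"
  then obtain a b where ab: "a \<in> keys A" "b \<in> keys B" "m = a + b" using keys_mult[of A B] by blast
  have om: "outer V m = outer V a + outer V b" using ab(3) by (simp add: outer_add)
  from strict show "mon_key w (outer V m) < mon_key w (a0 + b0)"
  proof
    assume "\<forall>m\<in>keys A. mon_key w (outer V m) < mon_key w a0"
    then show ?thesis using mon_key_lt_le_add[OF w _ B[rule_format, OF ab(2)]] ab(1) om by simp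
  next
    assume "\<forall>m\<in>keys B. mon_key w (outer V m) < mon_key w b0"
    then show ?thesis using mon_key_le_lt_add[OF w A[rule_format, OF ab(1)]] ab(2) om by simp
  qed
qed

lemma Ball_keys_add:
  fixes A B :: "('j, 'k::comm_ring_1) dpoly"
  assumes "\<forall>m\<in>keys A. P m" "\<forall>m\<in>keys B. P m"
  shows "\<forall>m\<in>keys (A + B). P m"
  using assms keys_add[of A B] by blast

lemma coeffs_in_mult:
  assumes I: "is_ideal_in V J" and p: "coeffs_in V J p"
  shows "coeffs_in V J (q * p)"
proof -
  have "p \<in> ideal_in UNIV J" using ideal_in_char[OF I, of UNIV] p by (simp add: polys_in_def)
  then have "q * p \<in> ideal_in UNIV J" by (rule ideal_in_mult[rotated]) (simp add: polys_in_def)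
  then show ?thesis using ideal_in_char[OF I, of UNIV] by simp
qed

lemma obtain_mon_key_max:
  fixes S :: "('a::countable \<Rightarrow>\<^sub>0 nat) set"
  assumes "finite S" "S \<noteq> {}"
  obtains a where "a \<in> S" "\<forall>b\<in>S. mon_key w b \<le> mon_key w a"
proof -
  have "Max (mon_key w ` S) \<in> mon_key w ` S" using assms by simp
  then obtain a where a: "a \<in> S" "mon_key w a = Max (mon_key w ` S)" by auto
  have "\<forall>b\<in>S. mon_key w b \<le> mon_key w a" using a(2) assms(1) by simp
  then show ?thesis using that a(1) by blast
qed

lemma keys_outer_filter_le:
  "\<forall>m\<in>keys (outer_filter V (\<lambda>x. mon_key w x \<le> mon_key w a0) A). mon_key w (outer V m) \<le> mon_key w a0"
  by (auto dest: keys_outer_filter)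

lemma keys_outer_filter_neq_less:
  assumes "\<forall>m\<in>keys A. mon_key w (outer V m) \<le> mon_key w a0"
  shows "\<forall>m\<in>keys (outer_filter V (\<lambda>x. x \<noteq> a0) A). mon_key w (outer V m) < mon_key w a0"
proof
  fix m assume "m \<in> keys (outer_filter V (\<lambda>x. x \<noteq> a0) A)"
  then have "m \<in> keys A" "outer V m \<noteq> a0" by (auto dest: keys_outer_filter)
  then show "mon_key w (outer V m) < mon_key w a0"
    using assms mon_key_inj[of w "outer V m" a0] by (auto simp: order_le_less)
qed

lemma vcoeff_mult_top:
  fixes A B :: "('j::countable, 'k::comm_ring_1) dpoly"
  assumes w: "additive w" and a0: "keys a0 \<inter> V = {}" and b0: "keys b0 \<inter> V = {}"
    and A: "\<forall>m\<in>keys A. mon_key w (outer V m) \<le> mon_key w a0"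
    and B: "\<forall>m\<in>keys B. mon_key w (outer V m) \<le> mon_key w b0"
  shows "vcoeff V (A * B) (a0 + b0) = vcoeff V A a0 * vcoeff V B b0"
proof -
  define At where "At = outer_filter V (\<lambda>x. x = a0) A"
  define Alo where "Alo = outer_filter V (\<lambda>x. x \<noteq> a0) A"
  define Bt where "Bt = outer_filter V (\<lambda>x. x = b0) B"
  define Blo where "Blo = outer_filter V (\<lambda>x. x \<noteq> b0) B"
  have At_le: "\<forall>m\<in>keys At. mon_key w (outer V m) \<le> mon_key w a0"
    unfolding At_def by (auto dest: keys_outer_filter)
  have Alo_less: "\<forall>m\<in>keys Alo. mon_key w (outer V m) < mon_key w a0"
    unfolding Alo_def by (rule keys_outer_filter_neq_less[OF A])
  have Blo_less: "\<forall>m\<in>keys Blo. mon_key w (outer V m) < mon_key w b0"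
    unfolding Blo_def by (rule keys_outer_filter_neq_less[OF B])
  have A_split: "A = At + Alo" and B_split: "B = Bt + Blo"
    unfolding At_def Alo_def Bt_def Blo_def by (simp_all add: outer_filter_split)
  have "A * B = At * B + Alo * B" by (subst A_split) (simp add: distrib_right)
  also have "At * B = At * Bt + At * Blo" by (subst B_split) (simp add: distrib_left)
  finally have "A * B = At * Bt + (At * Blo + Alo * B)" by (simp add: add.assoc)
  moreover have "vcoeff V (At * Blo + Alo * B) (a0 + b0) = 0"
  proof (rule vcoeff_eq_zero_if)
    show "\<forall>m\<in>keys (At * Blo + Alo * B). outer V m \<noteq> a0 + b0"
      using Ball_keys_add[OF keys_mult_mon_key_less[OF w At_le _ disjI2[OF Blo_less]]
                            keys_mult_mon_key_less[OF w _ B disjI1[OF Alo_less]]]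
            Blo_less Alo_less by (auto simp: less_imp_le)
    show "keys (a0 + b0) \<inter> V = {}" using a0 b0 keys_add_nat[of a0 b0] by auto
  qed
  moreover have "At * Bt = (vcoeff V A a0 * vcoeff V B b0) * (single a0 1 * single b0 1)"
    unfolding At_def Bt_def outer_filter_eq[OF a0] outer_filter_eq[OF b0] by (simp add: ac_simps)
  moreover have "single a0 1 * single b0 1 = single (a0 + b0) (1::'k)" by (simp add: mult_single)
  moreover have "keys (a0 + b0) \<inter> V = {}" using a0 b0 keys_add_nat[of a0 b0] by auto
  ultimately show ?thesis
    by (simp add: vcoeff_add vcoeff_mult_single_self vcoeff_polys_in polys_in_mult)
qed

lemma coeffs_in_diff_filter_top:
  assumes I: "is_ideal_in V J" and top: "\<forall>b\<in>supp_mod V J g. mon_key w b \<le> mon_key w a0"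
  shows "coeffs_in V J (g - outer_filter V (\<lambda>x. mon_key w x \<le> mon_key w a0) g)"
proof -
  have "g - outer_filter V (\<lambda>x. mon_key w x \<le> mon_key w a0) g
      = outer_filter V (\<lambda>x. \<not> mon_key w x \<le> mon_key w a0) g"
    using outer_filter_split[of V "\<lambda>x. mon_key w x \<le> mon_key w a0" g] by (simp add: algebra_simps)
  then show ?thesis
    using top is_ideal_in_zero[OF I] by (auto simp: coeffs_in_def supp_mod_def vcoeff_outer_filter)
qed

text \<open>Over a domain the product of the leading coefficients is the leading coefficient of the
  product; here the coefficient ring is k[V]/J, and "leading" refers to any additive weight
  refined by a monomial order.\<close>

lemma supp_mod_mult_top:
  fixes g h :: "('j::countable, 'k::comm_ring_1) dpoly"
  assumes P: "prime_ideal_in V J" and w: "additive w"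
    and g: "supp_mod V J g \<noteq> {}" and h: "supp_mod V J h \<noteq> {}"
  shows "\<exists>a0 b0. a0 \<in> supp_mod V J g \<and> b0 \<in> supp_mod V J h \<and>
     (\<forall>a\<in>supp_mod V J g. w a \<le> w a0) \<and> (\<forall>b\<in>supp_mod V J h. w b \<le> w b0) \<and>
     a0 + b0 \<in> supp_mod V J (g * h)"
proof -
  have I: "is_ideal_in V J" using P by (rule prime_ideal_in_is_ideal_in)
  obtain a0 where a0: "a0 \<in> supp_mod V J g" "\<forall>b\<in>supp_mod V J g. mon_key w b \<le> mon_key w a0"
    using obtain_mon_key_max[OF supp_mod_finite[OF I] g] by blast
  obtain b0 where b0: "b0 \<in> supp_mod V J h" "\<forall>b\<in>supp_mod V J h. mon_key w b \<le> mon_key w b0"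
    using obtain_mon_key_max[OF supp_mod_finite[OF I] h] by blast
  have a0V: "keys a0 \<inter> V = {}" and ca: "vcoeff V g a0 \<notin> J" using a0(1) by (auto simp: supp_mod_def)
  have b0V: "keys b0 \<inter> V = {}" and cb: "vcoeff V h b0 \<notin> J" using b0(1) by (auto simp: supp_mod_def)
  have abV: "keys (a0 + b0) \<inter> V = {}" using a0V b0V keys_add_nat[of a0 b0] by auto
  define G where "G = outer_filter V (\<lambda>x. mon_key w x \<le> mon_key w a0) g"
  define H where "H = outer_filter V (\<lambda>x. mon_key w x \<le> mon_key w b0) h"
  have "coeffs_in V J (g - G)" "coeffs_in V J (h - H)"
    unfolding G_def H_def by (intro coeffs_in_diff_filter_top[OF I] a0(2) b0(2))+
  then have "coeffs_in V J (h * (g - G) + G * (h - H))"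
    by (intro coeffs_in_add[OF I] coeffs_in_mult[OF I])
  moreover have "h * (g - G) + G * (h - H) = g * h - G * H" by (simp add: algebra_simps)
  ultimately have "coeffs_in V J (g * h - G * H)" by simp
  then have diff: "vcoeff V (g * h) (a0 + b0) - vcoeff V (G * H) (a0 + b0) \<in> J"
    using abV by (simp add: coeffs_in_def vcoeff_diff)
  have "vcoeff V (G * H) (a0 + b0) = vcoeff V g a0 * vcoeff V h b0"
    using vcoeff_mult_top[OF w a0V b0V keys_outer_filter_le keys_outer_filter_le]
    unfolding G_def H_def by (simp add: vcoeff_outer_filter a0V b0V)
  moreover have "vcoeff V g a0 * vcoeff V h b0 \<notin> J"
    using prime_ideal_inD[OF P vcoeff_polys_in vcoeff_polys_in] ca cb by blast
  moreover have "vcoeff V (G * H) (a0 + b0) \<in> J" if "vcoeff V (g * h) (a0 + b0) \<in> J"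
    using is_ideal_in_diff[OF I that diff] by simp
  ultimately have "vcoeff V (g * h) (a0 + b0) \<notin> J" by auto
  then have "a0 + b0 \<in> supp_mod V J (g * h)" using abV by (simp add: supp_mod_def)
  moreover have "\<forall>a\<in>supp_mod V J g. w a \<le> w a0" "\<forall>b\<in>supp_mod V J h. w b \<le> w b0"
    using a0(2) b0(2) by (auto simp: mon_key_def less_eq_prod_def)
  ultimately show ?thesis using a0(1) b0(1) by blast
qed

section \<open>Rankings, leaders, autoreduced sets\<close>

locale ranked =
  fixes le :: "'j::finite \<times> nat \<Rightarrow> 'j \<times> nat \<Rightarrow> bool"
  assumes ranked: "ranking le"
begin

lemma ranking_refl: "le u u" using ranked by (simp add: ranking_def)
lemma ranking_trans: "le u v \<Longrightarrow> le v w \<Longrightarrow> le u w" using ranked unfolding ranking_def by blast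
lemma ranking_antisym: "le u v \<Longrightarrow> le v u \<Longrightarrow> u = v" using ranked unfolding ranking_def by blast
lemma ranking_total: "le u v \<or> le v u" using ranked unfolding ranking_def by blast
lemma ranking_deriv_ge: "le (j, r) (j, r + s)" using ranked unfolding ranking_def by blast

lemma ranking_same_var_iff: "le (j, r) (j, r') \<longleftrightarrow> r \<le> r'"
proof
  assume h: "le (j, r) (j, r')"
  show "r \<le> r'"
  proof (rule ccontr)
    assume "\<not> r \<le> r'"
    then have "le (j, r') (j, r)" using ranking_deriv_ge[of j r' "r - r'"] by simp
    then have "r = r'" using ranking_antisym[OF h] by simp
    then show False using \<open>\<not> r \<le> r'\<close> by simp
  qed
next
  assume "r \<le> r'"
  then show "le (j, r) (j, r')" using ranking_deriv_ge[of j r "r' - r"] by simp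
qed

lemma ranking_proper_deriv: "s > 0 \<Longrightarrow> le (fst u, snd u + s) u \<Longrightarrow> False"
  using ranking_same_var_iff[of "fst u" "snd u + s" "snd u"] by (cases u) simp

lemma ranking_exists_max:
  assumes "finite M" "M \<noteq> {}"
  shows "\<exists>m\<in>M. \<forall>x\<in>M. le x m"
  using assms
proof (induction M rule: finite_ne_induct)
  case (singleton x) then show ?case using ranking_refl by simp
next
  case (insert x F)
  then obtain m where m: "m \<in> F" "\<forall>y\<in>F. le y m" by blast
  show ?case
  proof (cases "le x m")
    case True then show ?thesis using m by auto
  next
    case False
    then have "le m x" using ranking_total by blast
    then show ?thesis using m ranking_trans ranking_refl by blast
  qed
qed

lemma ranking_exists_min:
  assumes "finite M" "M \<noteq> {}"
  shows "\<exists>m\<in>M. \<forall>x\<in>M. le m x"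
  using assms
proof (induction M rule: finite_ne_induct)
  case (singleton x) then show ?case using ranking_refl by simp
next
  case (insert x F)
  then obtain m where m: "m \<in> F" "\<forall>y\<in>F. le m y" by blast
  show ?case
  proof (cases "le m x")
    case True then show ?thesis using m by auto
  next
    case False
    then have "le x m" using ranking_total by blast
    then show ?thesis using m ranking_trans ranking_refl by blast
  qed
qed

lemma finite_dvars: "finite (dvars p)"
  by (simp add: dvars_def)

lemma leader_unique:
  assumes "u \<in> dvars f" "\<forall>v\<in>dvars f. le v u"
  shows "leader le f = u"
  unfolding leader_def
proof (rule the_equality)
  show "u \<in> dvars f \<and> (\<forall>v\<in>dvars f. le v u)" using assms by blast
next
  fix x assume "x \<in> dvars f \<and> (\<forall>v\<in>dvars f. le v x)"
  then show "x = u" using assms ranking_antisym by blast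
qed

lemma leader_prop:
  assumes "nonconst f"
  shows "leader le f \<in> dvars f" "\<forall>v\<in>dvars f. le v (leader le f)"
proof -
  have ne: "dvars f \<noteq> {}" using assms by (simp add: nonconst_def)
  obtain m where "m \<in> dvars f" "\<forall>x\<in>dvars f. le x m"
    using ranking_exists_max[OF finite_dvars[of f] ne] by blast
  then have "leader le f = m" using leader_unique by blast
  then show "leader le f \<in> dvars f" "\<forall>v\<in>dvars f. le v (leader le f)"
    using \<open>m \<in> dvars f\<close> \<open>\<forall>x\<in>dvars f. le x m\<close> by auto
qed

lemma leader_in: "nonconst f \<Longrightarrow> leader le f \<in> dvars f" using leader_prop by blast
lemma leader_max: "nonconst f \<Longrightarrow> v \<in> dvars f \<Longrightarrow> le v (leader le f)" using leader_prop by blast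

lemma leader_deg_pos: "nonconst f \<Longrightarrow> degv (leader le f) f > 0"
  using leader_in degv_pos_iff by blast

lemma no_proper_deriv_self:
  assumes "nonconst f" "s > 0"
  shows "(fst (leader le f), snd (leader le f) + s) \<notin> dvars f"
  using leader_max[OF assms(1)] ranking_proper_deriv[OF assms(2)] by blast

definition rank where "rank f = (leader le f, degv (leader le f) f)"

lemma rank_eq_iff: "rank f = rank g \<longleftrightarrow> leader le f = leader le g \<and> degv (leader le f) f = degv (leader le g) g"
  by (simp add: rank_def)

definition rank_less where
  "rank_less x y \<longleftrightarrow> (le (fst x) (fst y) \<and> fst x \<noteq> fst y) \<or> (fst x = fst y \<and> snd x < snd y)"

lemma poly_rank_less_iff: "poly_rank_less le f g = rank_less (rank f) (rank g)"
  by (simp add: poly_rank_less_def rank_less_def rank_def)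

lemma poly_rank_less_rank_cong:
  assumes a: "rank f = rank f'" and b: "rank g = rank g'"
  shows "poly_rank_less le f g = poly_rank_less le f' g'"
  unfolding poly_rank_less_iff a b by simp

lemma poly_rank_eq_iff: "poly_rank_eq le f g \<longleftrightarrow> rank f = rank g"
  by (auto simp: poly_rank_eq_def rank_def)

lemma reduced_rank_cong:
  assumes "rank g = rank g'"
  shows "reduced le f g = reduced le f g'"
  using assms unfolding reduced_def rank_def by (metis prod.inject)

lemma poly_rank_trichotomy: "poly_rank_less le f g \<or> rank f = rank g \<or> poly_rank_less le g f"
proof (cases "leader le f = leader le g")
  case True
  then show ?thesis unfolding poly_rank_less_def rank_def by (cases "degv (leader le f) f" "degv (leader le g) g" rule: linorder_cases) auto
next
  case False
  then show ?thesis unfolding poly_rank_less_def rank_def using ranking_total[of "leader le f" "leader le g"] by auto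
qed

context
  fixes C :: "('j, 'k::comm_ring_1) dpoly list"
  assumes C_autoreduced: "autoreduced le C"
begin

lemma autoreduced_nonconst: "i < length C \<Longrightarrow> nonconst (C ! i)"
  using C_autoreduced by (simp add: autoreduced_def)

lemma autoreduced_reduced: "i < length C \<Longrightarrow> j < length C \<Longrightarrow> i \<noteq> j \<Longrightarrow> reduced le (C ! i) (C ! j)"
  using C_autoreduced by (simp add: autoreduced_def)

lemma autoreduced_less: "i < j \<Longrightarrow> j < length C \<Longrightarrow> poly_rank_less le (C ! i) (C ! j)"
  using C_autoreduced by (simp add: autoreduced_def)

lemma autoreduced_leader_less:
  assumes "i < j" "j < length C"
  shows "le (leader le (C ! i)) (leader le (C ! j)) \<and> leader le (C ! i) \<noteq> leader le (C ! j)"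
proof -
  have pl: "poly_rank_less le (C ! i) (C ! j)" by (rule autoreduced_less[OF assms])
  have "\<not> (leader le (C ! i) = leader le (C ! j))"
  proof
    assume eq: "leader le (C ! i) = leader le (C ! j)"
    then have "degv (leader le (C ! i)) (C ! i) < degv (leader le (C ! j)) (C ! j)"
      using pl by (auto simp: poly_rank_less_def)
    moreover have "reduced le (C ! j) (C ! i)" using autoreduced_reduced assms by simp
    then have "degv (leader le (C ! i)) (C ! j) < degv (leader le (C ! i)) (C ! i)"
      by (simp add: reduced_def)
    ultimately show False using eq by simp
  qed
  then show ?thesis using pl by (auto simp: poly_rank_less_def)
qed

lemma autoreduced_var_le_leader:
  assumes "i < length C" "v \<in> dvars (C ! i)"
  shows "le v (leader le (C ! i))"
  using leader_max[OF autoreduced_nonconst[OF assms(1)] assms(2)] .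

lemma autoreduced_var_less_leader:
  assumes "i < j" "j < length C" "v \<in> dvars (C ! i)"
  shows "le v (leader le (C ! j)) \<and> v \<noteq> leader le (C ! j)"
proof -
  have a: "le v (leader le (C ! i))" using autoreduced_var_le_leader assms by simp
  have b: "le (leader le (C ! i)) (leader le (C ! j))" "leader le (C ! i) \<noteq> leader le (C ! j)"
    using autoreduced_leader_less[OF assms(1,2)] by auto
  have "le v (leader le (C ! j))" using ranking_trans[OF a b(1)] .
  moreover have "v \<noteq> leader le (C ! j)"
  proof
    assume "v = leader le (C ! j)"
    then have "le (leader le (C ! j)) (leader le (C ! i))" using a by simp
    then show False using b ranking_antisym by blast
  qed
  ultimately show ?thesis by blast
qed

lemma autoreduced_no_proper_deriv:
  assumes "i < length C" "j < length C" "s > 0"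
  shows "(fst (leader le (C ! j)), snd (leader le (C ! j)) + s) \<notin> dvars (C ! i)"
proof (cases "i = j")
  case True then show ?thesis using no_proper_deriv_self[OF autoreduced_nonconst[OF assms(2)] assms(3)] by simp
next
  case False
  then have "reduced le (C ! i) (C ! j)" using autoreduced_reduced assms by simp
  then show ?thesis using assms(3) by (simp add: reduced_def)
qed

lemma autoreduced_leader_var_neq:
  assumes ij: "i < j" "j < length C"
  shows "fst (leader le (C ! i)) \<noteq> fst (leader le (C ! j))"
proof
  assume "fst (leader le (C ! i)) = fst (leader le (C ! j))"
  then obtain t r r' where ui: "leader le (C ! i) = (t, r)" and uj: "leader le (C ! j) = (t, r')"
    by (metis prod.collapse)
  have r: "r < r'" using autoreduced_leader_less[OF ij] ranking_same_var_iff[of t r r'] ui uj by auto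
  then have "(t, r') \<notin> dvars (C ! j)"
    using autoreduced_no_proper_deriv[of j i "r' - r"] ij ui by simp
  moreover have "(t, r') \<in> dvars (C ! j)" using leader_in[OF autoreduced_nonconst[OF ij(2)]] uj by simp
  ultimately show False by contradiction
qed

lemma autoreduced_length: "length C \<le> card (UNIV :: 'j set)"
proof -
  have "inj_on (\<lambda>i. fst (leader le (C ! i))) {..<length C}"
    by (rule inj_onI) (metis autoreduced_leader_var_neq lessThan_iff linorder_neqE_nat)
  then show ?thesis using card_inj_on_le[of _ "{..<length C}" "UNIV :: 'j set"] by simp
qed

end

lemma reduced_of_less:
  assumes nc: "nonconst c" "nonconst a" and l: "poly_rank_less le c a"
  shows "reduced le c a"
proof -
  let ?u = "leader le a" and ?uc = "leader le c"
  have le1: "le ?uc ?u" using l by (auto simp: poly_rank_less_def ranking_refl)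
  have "(fst ?u, snd ?u + s) \<notin> dvars c" if "s > 0" for s
  proof
    assume h: "(fst ?u, snd ?u + s) \<in> dvars c"
    then have "le (fst ?u, snd ?u + s) ?uc" by (rule leader_max[OF nc(1)])
    then have "le (fst ?u, snd ?u + s) ?u" using ranking_trans le1 by blast
    then show False using ranking_proper_deriv[OF that] by blast
  qed
  moreover have "degv ?u c < degv ?u a"
  proof (cases "?uc = ?u")
    case True then show ?thesis using l by (auto simp: poly_rank_less_def)
  next
    case False
    have "?u \<notin> dvars c"
    proof
      assume "?u \<in> dvars c"
      then have "le ?u ?uc" by (rule leader_max[OF nc(1)])
      then show False using ranking_antisym le1 False by blast
    qed
    then have "degv ?u c = 0" by (rule degv_notin)
    then show ?thesis using leader_deg_pos[OF nc(2)] by simp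
  qed
  ultimately show ?thesis by (simp add: reduced_def)
qed

lemma aset_rank_less_rank_cong:
  assumes "length A = length C" "\<forall>j<length C. rank (A ! j) = rank (C ! j)"
  shows "aset_rank_less le B A = aset_rank_less le B C"
proof -
  have e1: "poly_rank_eq le (B ! j) (A ! j) = poly_rank_eq le (B ! j) (C ! j)" if "j < length C" for j
  proof -
    have r: "rank (A ! j) = rank (C ! j)" using assms that by blast
    show ?thesis unfolding poly_rank_eq_iff r by simp
  qed
  have e2: "poly_rank_less le (B ! j) (A ! j) = poly_rank_less le (B ! j) (C ! j)" if "j < length C" for j
    using assms that poly_rank_less_rank_cong[of "B ! j" "B ! j" "A ! j" "C ! j"] by simp
  have ex: "(\<exists>i<min (length B) (length A). (\<forall>j<i. poly_rank_eq le (B ! j) (A ! j)) \<and> poly_rank_less le (B ! i) (A ! i))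
    = (\<exists>i<min (length B) (length C). (\<forall>j<i. poly_rank_eq le (B ! j) (C ! j)) \<and> poly_rank_less le (B ! i) (C ! i))"
  proof (intro iffI; elim exE conjE)
    fix i assume h: "i < min (length B) (length A)" "\<forall>j<i. poly_rank_eq le (B ! j) (A ! j)" "poly_rank_less le (B ! i) (A ! i)"
    have il: "i < length C" using h(1) assms(1) by simp
    have "\<forall>j<i. poly_rank_eq le (B ! j) (C ! j)" using h(2) e1 il by auto
    moreover have "poly_rank_less le (B ! i) (C ! i)" using h(3) e2 il by auto
    ultimately show "\<exists>i<min (length B) (length C). (\<forall>j<i. poly_rank_eq le (B ! j) (C ! j)) \<and> poly_rank_less le (B ! i) (C ! i)"
      using h(1) assms(1) by auto
  next
    fix i assume h: "i < min (length B) (length C)" "\<forall>j<i. poly_rank_eq le (B ! j) (C ! j)" "poly_rank_less le (B ! i) (C ! i)"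
    have il: "i < length C" using h(1) by simp
    have "\<forall>j<i. poly_rank_eq le (B ! j) (A ! j)" using h(2) e1 il by auto
    moreover have "poly_rank_less le (B ! i) (A ! i)" using h(3) e2 il by auto
    ultimately show "\<exists>i<min (length B) (length A). (\<forall>j<i. poly_rank_eq le (B ! j) (A ! j)) \<and> poly_rank_less le (B ! i) (A ! i)"
      using h(1) assms(1) by auto
  qed
  have ex2: "(length A < length B \<and> (\<forall>j<length A. poly_rank_eq le (B ! j) (A ! j)))
     = (length C < length B \<and> (\<forall>j<length C. poly_rank_eq le (B ! j) (C ! j)))"
    using e1 assms(1) by auto
  show ?thesis unfolding aset_rank_less_def ex ex2 by blast
qed

lemma autoreduced_take_append:
  assumes C: "autoreduced le C" and a: "nonconst a" and k: "k \<le> length C"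
    and below: "\<forall>i<k. poly_rank_less le (C ! i) a" and red: "\<forall>i<k. reduced le a (C ! i)"
  shows "autoreduced le (take k C @ [a])"
proof -
  let ?B = "take k C @ [a]"
  have len: "length ?B = Suc k" using k by simp
  have B: "i < k \<Longrightarrow> ?B ! i = C ! i" "?B ! k = a" for i using k by (simp_all add: nth_append)
  show ?thesis
    unfolding autoreduced_def
  proof (intro conjI allI impI)
    fix i assume "i < length ?B"
    then show "nonconst (?B ! i)"
      using B a autoreduced_nonconst[OF C] k len by (cases "i = k") auto
  next
    fix i j assume ij: "i < length ?B" "j < length ?B" "i \<noteq> j"
    then consider "i < k" "j < k" | "i = k" "j < k" | "i < k" "j = k" using len by linarith
    then show "reduced le (?B ! i) (?B ! j)"
    proof cases
      case 1 then show ?thesis using B ij autoreduced_reduced[OF C] k by simp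
    next
      case 2 then show ?thesis using B red by simp
    next
      case 3 then show ?thesis
        using B below reduced_of_less[OF autoreduced_nonconst[OF C] a] k by simp
    qed
  next
    fix i j assume "i < j" "j < length ?B"
    then show "poly_rank_less le (?B ! i) (?B ! j)"
      using B below autoreduced_less[OF C] len by (cases "j = k") auto
  qed
qed

text \<open>Insert a after the elements of C of lower rank and drop the rest.\<close>

lemma exists_lower_autoreduced:
  assumes C: "autoreduced le C" and a: "nonconst a" and red: "\<forall>i<length C. reduced le a (C ! i)"
  obtains B where "autoreduced le B" "set B \<subseteq> insert a (set C)" "aset_rank_less le B C"
proof -
  define k where "k = length (takeWhile (\<lambda>c. poly_rank_less le c a) C)"
  have k: "k \<le> length C" unfolding k_def by (rule length_takeWhile_le)
  have below: "\<forall>i<k. poly_rank_less le (C ! i) a"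
    using set_takeWhileD[OF nth_mem] takeWhile_nth unfolding k_def by metis
  define B where "B = take k C @ [a]"
  have "autoreduced le B"
    unfolding B_def using autoreduced_take_append[OF C a k below] red k by simp
  moreover have "set B \<subseteq> insert a (set C)" using set_take_subset[of k C] by (auto simp: B_def)
  moreover have "aset_rank_less le B C"
  proof (cases "k < length C")
    case True
    have "\<not> poly_rank_less le (C ! k) a"
      using nth_length_takeWhile[of "\<lambda>c. poly_rank_less le c a" C] True unfolding k_def by simp
    moreover have "rank (C ! k) \<noteq> rank a"
      using red True by (auto simp: rank_eq_iff reduced_def)
    ultimately have "poly_rank_less le a (C ! k)" using poly_rank_trichotomy[of "C ! k" a] by auto
    then show ?thesis
      unfolding aset_rank_less_def using True k
      by (intro disjI1 exI[of _ k]) (simp add: B_def nth_append poly_rank_eq_def)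
  next
    case False
    then show ?thesis
      unfolding aset_rank_less_def using k by (simp add: B_def nth_append poly_rank_eq_def)
  qed
  ultimately show ?thesis using that by blast
qed

lemma autoreduced_update:
  assumes C: "autoreduced le C" and i: "i < length C" and a: "nonconst a"
    and r: "rank a = rank (C ! i)" and red: "\<forall>j<length C. j \<noteq> i \<longrightarrow> reduced le a (C ! j)"
  shows "autoreduced le (C[i := a])"
proof -
  let ?C = "C[i := a]"
  have rank_C: "\<forall>j<length C. rank (?C ! j) = rank (C ! j)" using r i by (auto simp: nth_list_update)
  show ?thesis
    unfolding autoreduced_def
  proof (intro conjI allI impI)
    fix j assume "j < length ?C"
    then show "nonconst (?C ! j)" using a autoreduced_nonconst[OF C] by (cases "j = i") auto
  next
    fix j j' assume jj: "j < length ?C" "j' < length ?C" "j \<noteq> j'"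
    show "reduced le (?C ! j) (?C ! j')"
    proof (cases "j = i")
      case True
      then show ?thesis using red jj by (auto simp: nth_list_update)
    next
      case False
      then show ?thesis
        using autoreduced_reduced[OF C] jj reduced_rank_cong[of "?C ! j'" "C ! j'" "C ! j"] rank_C
        by simp
    qed
  next
    fix j j' assume jj: "j < j'" "j' < length ?C"
    then show "poly_rank_less le (?C ! j) (?C ! j')"
      using autoreduced_less[OF C] poly_rank_less_rank_cong[of "?C ! j" "C ! j" "?C ! j'" "C ! j'"]
        rank_C by simp
  qed
qed

end

lemma dConst_lookup_zero: "dvars (a :: ('j, 'k::comm_ring_1) dpoly) = {} \<Longrightarrow> a = dConst (lookup a 0)"
proof (rule poly_mapping_eqI)
  fix m assume d: "dvars a = {}"
  show "lookup a m = lookup (dConst (lookup a 0)) m"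
  proof (cases "m = 0")
    case True then show ?thesis by (simp add: dConst_def)
  next
    case False
    then obtain v where "v \<in> keys m" by (auto simp: in_keys_iff poly_mapping_eq_iff fun_eq_iff)
    then have "m \<notin> keys a" using d by (auto simp: dvars_def)
    then show ?thesis using False by (simp add: dConst_def in_keys_iff lookup_single_not_eq)
  qed
qed

lemma dConst_mult: "dConst a * dConst b = (dConst (a * b) :: ('j, 'k::comm_ring_1) dpoly)"
  by (simp add: dConst_def mult_single)

lemma dConst_one: "dConst 1 = (1 :: ('j, 'k::comm_ring_1) dpoly)"
  by (simp add: dConst_def)

lemma dConst_zero: "dConst 0 = (0 :: ('j, 'k::comm_ring_1) dpoly)"
  by (simp add: dConst_def)

locale prime_ranked = ranked le for le :: "'j::finite \<times> nat \<Rightarrow> 'j \<times> nat \<Rightarrow> bool" +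
  fixes P :: "('j, 'k::field_char_0) dpoly set"
  assumes prime: "prime_ideal_in UNIV P"
begin

lemma P_zero: "0 \<in> P" using prime by (simp add: prime_ideal_in_def)
lemma P_one: "1 \<notin> P" using prime by (simp add: prime_ideal_in_def)
lemma P_add: "a \<in> P \<Longrightarrow> b \<in> P \<Longrightarrow> a + b \<in> P" using prime by (simp add: prime_ideal_in_def)
lemma P_mult: "a \<in> P \<Longrightarrow> r * a \<in> P" using prime by (simp add: prime_ideal_in_def polys_in_def)
lemma P_prime: "a * b \<in> P \<Longrightarrow> a \<in> P \<or> b \<in> P" using prime by (simp add: prime_ideal_in_def polys_in_def)
lemma P_uminus: "a \<in> P \<Longrightarrow> - a \<in> P" using P_mult[of a "-1"] by simp
lemma P_diff: "a \<in> P \<Longrightarrow> b \<in> P \<Longrightarrow> a - b \<in> P" using P_add[of a "- b"] P_uminus[of b] by simp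
lemma P_diff_iff: "a - b \<in> P \<Longrightarrow> a \<in> P \<longleftrightarrow> b \<in> P"
  using P_diff[of a "a - b"] P_add[of "a - b" b] by auto

lemma const_notin_P:
  assumes "dvars a = {}" "a \<noteq> 0"
  shows "a \<notin> P"
proof
  assume aP: "a \<in> P"
  have e: "a = dConst (lookup a 0)" by (rule dConst_lookup_zero[OF assms(1)])
  then have c: "lookup a 0 \<noteq> 0" using assms(2) dConst_zero by metis
  have "dConst (inverse (lookup a 0)) * a = 1"
    by (subst e) (simp add: dConst_mult c dConst_one)
  moreover have "dConst (inverse (lookup a 0)) * a \<in> P" by (rule P_mult[OF aP])
  ultimately show False using P_one by simp
qed

lemma prod_list_notin: "(\<forall>x\<in>set xs. x \<notin> P) \<Longrightarrow> prod_list xs \<notin> P"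
proof (induction xs)
  case Nil then show ?case using P_one by simp
next
  case (Cons x xs) then show ?case using P_prime by auto
qed

lemma mult_closure_notin: "T \<inter> P = {} \<Longrightarrow> s \<in> mult_closure T \<Longrightarrow> s \<notin> P"
  unfolding mult_closure_def using prod_list_notin by blast

lemma ideal_in_P: "S \<subseteq> P \<Longrightarrow> ideal_in W S \<subseteq> P"
  by (rule ideal_in_sub_ideal) (auto intro: P_zero P_add P_mult)

lemma P_constants: "P \<inter> polys_in {} = {0}"
  using const_notin_P P_zero by (auto simp: polys_in_def)

lemma char_set_no_reduced_element:
  assumes C: "char_set le P C" and aP: "a \<in> P" and a0: "a \<noteq> 0"
    and red: "\<forall>i<length C. reduced le a (C ! i)"
  shows False
proof (cases "nonconst a")
  case True
  then obtain B where B: "autoreduced le B" "set B \<subseteq> insert a (set C)" "aset_rank_less le B C"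
    using exists_lower_autoreduced C red by (auto simp: char_set_def)
  moreover have "set B \<subseteq> P" using B(2) aP C by (auto simp: char_set_def)
  ultimately show False using C by (auto simp: char_set_def)
next
  case False
  then show False using const_notin_P aP a0 by (simp add: nonconst_def)
qed

lemma char_set_update:
  assumes C: "char_set le P C" and i: "i < length C" and aP: "a \<in> P" and a: "nonconst a"
    and r: "rank a = rank (C ! i)" and red: "\<forall>j<length C. j \<noteq> i \<longrightarrow> reduced le a (C ! j)"
  shows "char_set le P (C[i := a])"
proof -
  have "\<forall>j<length C. rank (C[i := a] ! j) = rank (C ! j)" using r i by (auto simp: nth_list_update)
  then have "aset_rank_less le B (C[i := a]) = aset_rank_less le B C" for B
    by (intro aset_rank_less_rank_cong) simp_all
  moreover have "set (C[i := a]) \<subseteq> P"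
    using C aP set_update_subset_insert[of C i a] by (auto simp: char_set_def)
  ultimately show ?thesis
    using C autoreduced_update[OF _ i a r red] by (auto simp: char_set_def)
qed

end

context ranked
begin

section \<open>Existence of characteristic sets\<close>

definition deriv_less where "deriv_less = {(x, y). le x y \<and> x \<noteq> y}"

lemma wf_deriv_less: "wf deriv_less"
proof (rule wfI_min)
  fix x :: "'j \<times> nat" and Q assume xQ: "x \<in> Q"
  define M where "M = (\<lambda>j. (j, LEAST r. (j, r) \<in> Q)) ` (fst ` Q)"
  have finM: "finite M" unfolding M_def by (rule finite_imageI) simp
  have neM: "M \<noteq> {}" using xQ by (auto simp: M_def)
  have MQ: "M \<subseteq> Q"
  proof
    fix y assume "y \<in> M"
    then obtain z where z: "z \<in> Q" "y = (fst z, LEAST r. (fst z, r) \<in> Q)" by (auto simp: M_def)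
    have "(fst z, snd z) \<in> Q" using z(1) by simp
    then have "(fst z, LEAST r. (fst z, r) \<in> Q) \<in> Q" by (rule LeastI)
    then show "y \<in> Q" using z(2) by simp
  qed
  obtain m where m: "m \<in> M" "\<forall>y\<in>M. le m y" using ranking_exists_min[OF finM neM] by blast
  show "\<exists>z\<in>Q. \<forall>y. (y, z) \<in> deriv_less \<longrightarrow> y \<notin> Q"
  proof (intro bexI[of _ m] allI impI)
    fix y assume yR: "(y, m) \<in> deriv_less"
    show "y \<notin> Q"
    proof
      assume yQ: "y \<in> Q"
      obtain j r where y: "y = (j, r)" by fastforce
      let ?r = "LEAST r. (j, r) \<in> Q"
      have "j \<in> fst ` Q" using yQ y by force
      then have jM: "(j, ?r) \<in> M" unfolding M_def by blast
      have "?r \<le> r" using yQ y by (auto intro: Least_le)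
      then have "le (j, ?r) y" using ranking_same_var_iff y by simp
      then have "le m y" using m jM ranking_trans by blast
      moreover have "le y m" "y \<noteq> m" using yR by (auto simp: deriv_less_def)
      ultimately show False using ranking_antisym by blast
    qed
  qed (use m MQ in auto)
qed

definition rank_rel where "rank_rel = deriv_less <*lex*> less_than"

lemma wf_rank_rel: "wf rank_rel" unfolding rank_rel_def by (intro wf_lex_prod wf_deriv_less wf_less_than)

lemma rank_less_iff_rank_rel: "rank_less x y \<longleftrightarrow> (x, y) \<in> rank_rel"
  by (cases x; cases y) (auto simp: rank_less_def rank_rel_def deriv_less_def)

definition rank_opt_rel where "rank_opt_rel = {(Some x, Some y) | x y. (x, y) \<in> rank_rel} \<union> {(Some x, None) | x. True}"

lemma wf_rank_opt_rel: "wf rank_opt_rel"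
proof -
  define fo :: "(('j \<times> nat) \<times> nat) option \<Rightarrow> nat \<times> (('j \<times> nat) \<times> nat)"
    where "fo opt = (case opt of None \<Rightarrow> (1::nat, undefined) | Some x \<Rightarrow> (0, x))" for opt
  have "rank_opt_rel \<subseteq> inv_image (less_than <*lex*> rank_rel) fo"
    by (auto simp: rank_opt_rel_def fo_def)
  moreover have "wf (inv_image (less_than <*lex*> rank_rel) fo)"
    by (intro wf_inv_image wf_lex_prod wf_less_than wf_rank_rel)
  ultimately show ?thesis by (rule wf_subset[rotated])
qed

text \<open>Autoreduced sets have at most one element per indeterminate, so padding their rank
  sequences with None (a rank above all others) to a common length turns the comparison of
  autoreduced sets into a lexicographic order of fixed length, which is well-founded.\<close>

definition rank_seq :: "('j, 'k::comm_ring_1) dpoly list \<Rightarrow> ((('j \<times> nat) \<times> nat) option) list" where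
  "rank_seq B = map (\<lambda>c. Some (rank c)) B @ replicate (Suc (card (UNIV :: 'j set)) - length B) None"

lemma lex_at_index:
  assumes "length xs = length ys" "i < length xs" "take i xs = take i ys" "(xs ! i, ys ! i) \<in> r"
  shows "(xs, ys) \<in> lex r"
proof -
  have "xs = take i xs @ xs ! i # drop (Suc i) xs" using assms(2) by (rule id_take_nth_drop)
  moreover have "ys = take i xs @ ys ! i # drop (Suc i) ys" using assms(1,2,3) id_take_nth_drop[of i ys] by simp
  ultimately show ?thesis unfolding lex_conv using assms(1,4) by blast
qed

lemma rank_seq_lex:
  fixes B C :: "('j, 'k::comm_ring_1) dpoly list"
  assumes aB: "autoreduced le B" and aC: "autoreduced le C" and l: "aset_rank_less le B C"
  shows "(rank_seq B, rank_seq C) \<in> lex rank_opt_rel"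
proof -
  define NN where "NN = Suc (card (UNIV :: 'j set))"
  have lB: "length B < NN" using autoreduced_length[OF aB] by (simp add: NN_def)
  have lC: "length C < NN" using autoreduced_length[OF aC] by (simp add: NN_def)
  have lpB: "length (rank_seq B) = NN" using lB by (simp add: rank_seq_def NN_def)
  have lpC: "length (rank_seq C) = NN" using lC by (simp add: rank_seq_def NN_def)
  have nB: "rank_seq B ! j = (if j < length B then Some (rank (B ! j)) else None)" if "j < NN" for j
    using that lB by (auto simp: rank_seq_def nth_append NN_def)
  have nC: "rank_seq C ! j = (if j < length C then Some (rank (C ! j)) else None)" if "j < NN" for j
    using that lC by (auto simp: rank_seq_def nth_append NN_def)
  have tk: "take i (rank_seq B) = take i (rank_seq C)" if "i \<le> length B" "i \<le> length C" "\<forall>j<i. rank (B ! j) = rank (C ! j)" for i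
  proof (rule nth_equalityI)
    show "length (take i (rank_seq B)) = length (take i (rank_seq C))" using lpB lpC by simp
  next
    fix j assume "j < length (take i (rank_seq B))"
    then have j: "j < i" "j < NN" using lpB by auto
    then show "take i (rank_seq B) ! j = take i (rank_seq C) ! j" using that nB nC by auto
  qed
  from l show ?thesis unfolding aset_rank_less_def
  proof (elim disjE exE conjE)
    fix i assume i: "i < min (length B) (length C)" and pre: "\<forall>j<i. poly_rank_eq le (B ! j) (C ! j)"
      and lt: "poly_rank_less le (B ! i) (C ! i)"
    have pre': "\<forall>j<i. rank (B ! j) = rank (C ! j)" using pre by (simp add: poly_rank_eq_iff)
    have iN: "i < NN" using i lB by simp
    show ?thesis
    proof (rule lex_at_index)
      show "length (rank_seq B) = length (rank_seq C)" using lpB lpC by simp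
      show "i < length (rank_seq B)" using iN lpB by simp
      show "take i (rank_seq B) = take i (rank_seq C)" using tk i pre' by simp
      show "(rank_seq B ! i, rank_seq C ! i) \<in> rank_opt_rel"
        using nB[OF iN] nC[OF iN] i lt by (simp add: rank_opt_rel_def poly_rank_less_iff rank_less_iff_rank_rel)
    qed
  next
    assume lt: "length C < length B" and pre: "\<forall>j<length C. poly_rank_eq le (B ! j) (C ! j)"
    have pre': "\<forall>j<length C. rank (B ! j) = rank (C ! j)" using pre by (simp add: poly_rank_eq_iff)
    have iN: "length C < NN" using lC by simp
    show ?thesis
    proof (rule lex_at_index)
      show "length (rank_seq B) = length (rank_seq C)" using lpB lpC by simp
      show "length C < length (rank_seq B)" using iN lpB by simp
      show "take (length C) (rank_seq B) = take (length C) (rank_seq C)" using tk lt pre' by simp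
      show "(rank_seq B ! length C, rank_seq C ! length C) \<in> rank_opt_rel"
        using nB[OF iN] nC[OF iN] lt by (simp add: rank_opt_rel_def)
    qed
  qed
qed

lemma exists_char_set:
  fixes S :: "('j, 'k::comm_ring_1) dpoly set"
  shows "\<exists>C. char_set le S C"
proof -
  define Q where "Q = {B. autoreduced le B \<and> set B \<subseteq> S}"
  have "[] \<in> Q" by (simp add: Q_def autoreduced_def)
  have wfR: "wf (inv_image (lex rank_opt_rel) rank_seq)" by (intro wf_inv_image wf_lex wf_rank_opt_rel)
  obtain C where C: "C \<in> Q" "\<And>B. (B, C) \<in> inv_image (lex rank_opt_rel) rank_seq \<Longrightarrow> B \<notin> Q"
    using wfE_min[OF wfR \<open>[] \<in> Q\<close>] by blast
  have "char_set le S C"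
    unfolding char_set_def
  proof (intro conjI allI impI)
    show "autoreduced le C" "set C \<subseteq> S" using C(1) by (auto simp: Q_def)
  next
    fix B assume B: "autoreduced le B \<and> set B \<subseteq> S"
    show "\<not> aset_rank_less le B C"
    proof
      assume "aset_rank_less le B C"
      then have "(rank_seq B, rank_seq C) \<in> lex rank_opt_rel" using rank_seq_lex B C(1) by (auto simp: Q_def)
      then have "B \<notin> Q" using C(2) by simp
      then show False using B by (simp add: Q_def)
    qed
  qed
  then show ?thesis by blast
qed

end

section \<open>Pseudo-division\<close>

lemma keys_mult_lookup_less:
  fixes p q :: "('j, 'k::comm_ring_1) dpoly"
  assumes "\<forall>m\<in>keys p. lookup m u \<le> a" "\<forall>m\<in>keys q. lookup m u < b"
  shows "\<forall>m\<in>keys (p * q). lookup m u < a + b"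
proof
  fix m assume "m \<in> keys (p * q)"
  then obtain x y where "x \<in> keys p" "y \<in> keys q" "m = x + y" using keys_mult[of p q] by blast
  then show "lookup m u < a + b" using assms by (fastforce simp: lookup_add intro: add_le_less_mono)
qed

lemma keys_mult_lookup_le:
  fixes p q :: "('j, 'k::comm_ring_1) dpoly"
  assumes "\<forall>m\<in>keys p. lookup m u \<le> a" "\<forall>m\<in>keys q. lookup m u \<le> b"
  shows "\<forall>m\<in>keys (p * q). lookup m u \<le> a + b"
proof
  fix m assume "m \<in> keys (p * q)"
  then obtain x y where "x \<in> keys p" "y \<in> keys q" "m = x + y" using keys_mult[of p q] by blast
  then show "lookup m u \<le> a + b" using assms by (fastforce simp: lookup_add intro: add_mono)
qed

lemma keys_coeffv_lookup: "\<forall>m\<in>keys (coeffv u d p). lookup m u \<le> 0"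
  using keys_coeffv by fastforce

lemma keys_dVar_power_lookup: "\<forall>m\<in>keys ((dVar u :: ('j, 'k::comm_ring_1) dpoly) ^ k). lookup m u \<le> k"
  by (auto simp: dVar_power lookup_single_if split: if_splits)

lemma degv_less_if_keys: "(\<forall>m\<in>keys p. lookup m u < n) \<Longrightarrow> 0 < n \<Longrightarrow> degv u p < n"
proof -
  assume h: "\<forall>m\<in>keys p. lookup m u < n" and n: "0 < n"
  have "degv u p \<le> n - 1" by (rule degv_le) (use h in force)
  then show ?thesis using n by simp
qed

lemma pseudo_div_step_degv_less:
  fixes f a :: "('j, 'k::comm_ring_1) dpoly"
  assumes e: "degv u f = e" "e > 0" and n: "degv u a = n" "e \<le> n"
  shows "degv u (coeffv u e f * a - coeffv u n a * dVar u ^ (n - e) * f) < n"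
proof -
  let ?X = "dVar u :: ('j, 'k) dpoly" let ?I = "coeffv u e f" let ?A = "coeffv u n a"
  obtain flow where fl: "f = ?I * ?X ^ e + flow" "\<forall>m\<in>keys flow. lookup m u < e"
    using poly_degv_decomp[of f u] e by (auto simp: mult.commute)
  obtain alow where al: "a = ?A * ?X ^ n + alow" "\<forall>m\<in>keys alow. lookup m u < n"
    using poly_degv_decomp[of a u] n by auto
  have "?X ^ (n - e) * ?X ^ e = ?X ^ n" using n(2) by (simp add: power_add[symmetric])
  then have eq: "?I * a - ?A * ?X ^ (n - e) * f = ?I * alow - ?A * ?X ^ (n - e) * flow"
    by (subst al(1), subst fl(1)) (simp add: algebra_simps)
  have "\<forall>m\<in>keys (?I * alow). lookup m u < 0 + n"
    by (rule keys_mult_lookup_less[OF keys_coeffv_lookup al(2)])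
  moreover have "\<forall>m\<in>keys (?A * ?X ^ (n - e) * flow). lookup m u < (0 + (n - e)) + e"
    by (intro keys_mult_lookup_less[OF _ fl(2)] keys_mult_lookup_le keys_coeffv_lookup
        keys_dVar_power_lookup)
  ultimately have "\<forall>m\<in>keys (?I * alow - ?A * ?X ^ (n - e) * flow). lookup m u < n"
    using keys_diff_subset n(2) by fastforce
  then show ?thesis unfolding eq by (rule degv_less_if_keys) (use e n in simp)
qed

lemma pseudo_div_step_dvars:
  fixes f a :: "('j, 'k::comm_ring_1) dpoly"
  assumes "u \<in> dvars f"
  shows "dvars (coeffv u e f * a - coeffv u n a * dVar u ^ k * f) \<subseteq> dvars a \<union> dvars f"
  using dvars_diff dvars_mult[of "coeffv u e f" a] dvars_mult[of "coeffv u n a * dVar u ^ k" f]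
    dvars_mult[of "coeffv u n a" "dVar u ^ k"] dvars_coeffv[of u e f] dvars_coeffv[of u n a]
    dvars_dVar_power[of u k] assms
  by blast

lemma pseudo_div_step_degv_other:
  fixes f a :: "('j, 'k::comm_ring_1) dpoly"
  assumes u: "u \<in> dvars f" and w: "w \<notin> dvars f"
  shows "degv w (coeffv u e f * a - coeffv u n a * dVar u ^ k * f) \<le> degv w a"
proof -
  have "degv w (coeffv u e f) = 0" "degv w f = 0" "degv w (dVar u ^ k :: ('j, 'k) dpoly) = 0"
    using w u dvars_coeffv[of u e f] dvars_dVar_power[of u k] by (auto intro!: degv_notin)
  then have "degv w (coeffv u e f * a) \<le> degv w a"
    "degv w (coeffv u n a * dVar u ^ k * f) \<le> degv w a"
    using degv_mult[of w "coeffv u e f" a] degv_mult[of w "coeffv u n a * dVar u ^ k" f]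
      degv_mult[of w "coeffv u n a" "dVar u ^ k"] degv_coeffv[of w u n a] by simp_all
  then show ?thesis using degv_diff[of w "coeffv u e f * a"] by (meson max.boundedI order_trans)
qed

lemma ideal_in_compose:
  assumes "s \<in> polys_in W" "x - b \<in> ideal_in W S" "s * b - c \<in> ideal_in W S"
  shows "s * x - c \<in> ideal_in W S"
proof -
  have "s * (x - b) + (s * b - c) \<in> ideal_in W S" using assms by (intro ideal_in_add ideal_in_mult)
  moreover have "s * (x - b) + (s * b - c) = s * x - c" by (simp add: algebra_simps)
  ultimately show ?thesis by simp
qed

lemma pseudo_reduce_single:
  fixes f :: "('j, 'k::comm_ring_1) dpoly"
  assumes e: "degv u f = e" "e > 0" and W: "dvars f \<subseteq> W"
  shows "a \<in> polys_in W \<Longrightarrow> \<exists>b k. b \<in> polys_in W \<and> (coeffv u e f) ^ k * a - b \<in> ideal_in W {f} \<and>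
           degv u b < e \<and> (\<forall>w. w \<notin> dvars f \<longrightarrow> degv w b \<le> degv w a)"
proof (induction "degv u a" arbitrary: a rule: less_induct)
  case less
  let ?I = "coeffv u e f"
  show ?case
  proof (cases "degv u a < e")
    case True
    then show ?thesis using less.prems by (intro exI[of _ a] exI[of _ 0]) (simp add: ideal_in_zero)
  next
    case False
    define n where "n = degv u a"
    define A where "A = coeffv u n a * dVar u ^ (n - e)"
    define a1 where "a1 = ?I * a - A * f"
    have u: "u \<in> dvars f" using e degv_pos_iff by blast
    have "coeffv u n a \<in> polys_in W" "dVar u ^ (n - e) \<in> polys_in W"
      using dvars_coeffv[of u n a] dvars_dVar_power[of u "n - e"] less.prems u W
      by (auto simp: polys_in_def)
    then have AW: "A \<in> polys_in W" unfolding A_def by (rule polys_in_mult)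
    have a1W: "a1 \<in> polys_in W"
      using pseudo_div_step_dvars[OF u, of e a n "n - e"] less.prems W
      unfolding a1_def A_def polys_in_def by blast
    have "degv u a1 < degv u a"
      using pseudo_div_step_degv_less[OF e n_def[symmetric]] False by (simp add: a1_def A_def n_def)
    then obtain b k where b: "b \<in> polys_in W" "?I ^ k * a1 - b \<in> ideal_in W {f}" "degv u b < e"
        "\<forall>w. w \<notin> dvars f \<longrightarrow> degv w b \<le> degv w a1"
      using less.hyps a1W by blast
    have step: "?I * a - a1 \<in> ideal_in W {f}" unfolding a1_def by (simp add: ideal_in_gen[OF AW])
    have "?I ^ k \<in> polys_in W"
      using dvars_coeffv[of u e f] W by (intro polys_in_power) (auto simp: polys_in_def)
    then have "?I ^ k * (?I * a) - b \<in> ideal_in W {f}" by (rule ideal_in_compose[OF _ step b(2)])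
    then have "?I ^ Suc k * a - b \<in> ideal_in W {f}" by (simp add: ac_simps)
    moreover have "\<forall>w. w \<notin> dvars f \<longrightarrow> degv w b \<le> degv w a"
      using b(4) pseudo_div_step_degv_other[OF u] unfolding a1_def A_def by (meson order_trans)
    ultimately show ?thesis using b(1,3) by blast
  qed
qed

lemma mult_closure_one: "1 \<in> mult_closure T"
  unfolding mult_closure_def by (rule CollectI, rule exI[of _ "[]"]) simp

lemma mult_closure_mult: "s \<in> mult_closure T \<Longrightarrow> t \<in> mult_closure T \<Longrightarrow> s * t \<in> mult_closure T"
proof -
  assume "s \<in> mult_closure T" "t \<in> mult_closure T"
  then obtain xs ys where "s = prod_list xs" "set xs \<subseteq> T" "t = prod_list ys" "set ys \<subseteq> T"
    unfolding mult_closure_def by blast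
  then show ?thesis unfolding mult_closure_def by (intro CollectI exI[of _ "xs @ ys"]) auto
qed

lemma mult_closure_power: "x \<in> T \<Longrightarrow> x ^ k \<in> mult_closure T"
  unfolding mult_closure_def by (intro CollectI exI[of _ "replicate k x"]) (auto simp: prod_list_replicate)

lemma mult_closure_mono: "T \<subseteq> T' \<Longrightarrow> s \<in> mult_closure T \<Longrightarrow> s \<in> mult_closure T'"
  unfolding mult_closure_def by blast

lemma mult_closure_polys: "T \<subseteq> polys_in W \<Longrightarrow> s \<in> mult_closure T \<Longrightarrow> s \<in> polys_in W"
  unfolding mult_closure_def using polys_in_prod_list by blast

definition vars_upto :: "('j, 'k::comm_ring_1) dpoly list \<Rightarrow> nat \<Rightarrow> ('j \<times> nat) set" where
  "vars_upto C i = (\<Union>j<i. dvars (C ! j))"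

lemma vars_upto_Suc: "vars_upto C (Suc i) = vars_upto C i \<union> dvars (C ! i)"
  by (auto simp: vars_upto_def lessThan_Suc)

lemma vars_upto_0: "vars_upto C 0 = {}" by (simp add: vars_upto_def)

lemma vars_upto_mono: "i \<le> i' \<Longrightarrow> vars_upto C i \<subseteq> vars_upto C i'"
  unfolding vars_upto_def by (intro UN_mono) auto

lemma dvars_set_take:
  assumes "c \<in> set (take i C)"
  shows "dvars c \<subseteq> vars_upto C i"
proof -
  obtain j where j: "j < length (take i C)" "c = take i C ! j" using assms by (auto simp: in_set_conv_nth)
  then have "j < i" "c = C ! j" by auto
  then show ?thesis unfolding vars_upto_def by blast
qed

lemma set_take_Suc: "i < length C \<Longrightarrow> set (take (Suc i) C) = insert (C ! i) (set (take i C))"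
  by (simp add: take_Suc_conv_app_nth)

lemma initial_polys_in: "initial le f \<in> polys_in (dvars f)"
  using dvars_coeffv[of "leader le f" "degv (leader le f) f" f] unfolding initial_def polys_in_def by blast

lemma initials_polys_in: "initial le ` set (take i C) \<subseteq> polys_in (vars_upto C i)"
proof
  fix x assume "x \<in> initial le ` set (take i C)"
  then obtain c where c: "c \<in> set (take i C)" "x = initial le c" by blast
  then show "x \<in> polys_in (vars_upto C i)"
    using initial_polys_in[of le c] dvars_set_take[OF c(1)] polys_in_mono by blast
qed

lemma set_take_polys_in: "set (take i C) \<subseteq> polys_in (vars_upto C i)"
  using dvars_set_take by (auto simp: polys_in_def)

context ranked
begin

lemma leader_notin_vars_upto:
  assumes C_autoreduced: "autoreduced le C" and i: "i < length C"
  shows "leader le (C ! i) \<notin> vars_upto C i"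
proof
  assume "leader le (C ! i) \<in> vars_upto C i"
  then obtain x where x: "x < i" "leader le (C ! i) \<in> dvars (C ! x)" by (auto simp: vars_upto_def)
  then show False using autoreduced_var_less_leader[OF C_autoreduced x(1) i x(2)] by simp
qed

lemma rank_eq_if_not_reduced:
  assumes C: "autoreduced le C" and i: "i < length C" and a: "dvars a \<subseteq> vars_upto C (Suc i)"
    and deg: "degv (leader le (C ! i)) a \<le> degv (leader le (C ! i)) (C ! i)"
    and not_red: "\<not> reduced le a (C ! i)"
  shows "nonconst a \<and> rank a = rank (C ! i)"
proof -
  let ?u = "leader le (C ! i)"
  have below: "le v ?u" if v: "v \<in> dvars a" for v
  proof -
    obtain x where x: "x < Suc i" "v \<in> dvars (C ! x)" using a v by (auto simp: vars_upto_def)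
    show ?thesis
    proof (cases "x = i")
      case True then show ?thesis using autoreduced_var_le_leader[OF C i] x by simp
    next
      case False then show ?thesis using autoreduced_var_less_leader[OF C _ i x(2)] x(1) by simp
    qed
  qed
  have "(fst ?u, snd ?u + s) \<notin> dvars a" if "s > 0" for s
    using below ranking_proper_deriv[OF that] by blast
  then have deg_eq: "degv ?u a = degv ?u (C ! i)" using not_red deg by (auto simp: reduced_def)
  moreover have "degv ?u (C ! i) > 0" using leader_deg_pos[OF autoreduced_nonconst[OF C i]] .
  ultimately have "?u \<in> dvars a" using degv_pos_iff by metis
  then have "nonconst a" "leader le a = ?u" using leader_unique[of ?u a] below by (auto simp: nonconst_def)
  then show ?thesis using deg_eq by (simp add: rank_eq_iff)
qed

lemma pseudo_reduce:
  assumes C: "autoreduced le C"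
  shows "i \<le> length C \<Longrightarrow> vars_upto C i \<subseteq> W \<Longrightarrow> a \<in> polys_in W \<Longrightarrow>
    \<exists>a' s. a' \<in> polys_in W \<and> s \<in> mult_closure (initial le ` set (take i C)) \<and>
      s * a - a' \<in> ideal_in W (set (take i C)) \<and>
      (\<forall>j<i. degv (leader le (C ! j)) a' < degv (leader le (C ! j)) (C ! j)) \<and>
      (\<forall>w. w \<notin> vars_upto C i \<longrightarrow> degv w a' \<le> degv w a)"
proof (induction i arbitrary: a)
  case 0
  then show ?case by (intro exI[of _ a] exI[of _ 1]) (simp add: mult_closure_one ideal_in_zero)
next
  case (Suc i)
  have i: "i < length C" using Suc.prems by simp
  let ?f = "C ! i" let ?u = "leader le ?f" let ?I = "initial le ?f"
  let ?S = "set (take (Suc i) C)"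
  have S: "?S = insert ?f (set (take i C))" by (rule set_take_Suc[OF i])
  have fW: "dvars ?f \<subseteq> W" and VW: "vars_upto C i \<subseteq> W" using Suc.prems(2) vars_upto_Suc by auto
  obtain b k where b: "b \<in> polys_in W" "?I ^ k * a - b \<in> ideal_in W {?f}"
      "degv ?u b < degv ?u ?f" "\<forall>w. w \<notin> dvars ?f \<longrightarrow> degv w b \<le> degv w a"
    using pseudo_reduce_single[OF refl leader_deg_pos[OF autoreduced_nonconst[OF C i]] fW Suc.prems(3)]
    by (auto simp: initial_def)
  obtain a' s where a': "a' \<in> polys_in W" "s \<in> mult_closure (initial le ` set (take i C))"
      "s * b - a' \<in> ideal_in W (set (take i C))"
      "\<forall>j<i. degv (leader le (C ! j)) a' < degv (leader le (C ! j)) (C ! j)"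
      "\<forall>w. w \<notin> vars_upto C i \<longrightarrow> degv w a' \<le> degv w b"
    using Suc.IH[OF _ VW b(1)] i by auto
  have "s * ?I ^ k \<in> mult_closure (initial le ` ?S)"
    using S mult_closure_mono[OF _ a'(2), of "initial le ` ?S"]
    by (intro mult_closure_mult mult_closure_power) auto
  moreover have "s * ?I ^ k * a - a' \<in> ideal_in W ?S"
    unfolding mult.assoc
  proof (rule ideal_in_compose)
    show "s \<in> polys_in W" using mult_closure_polys[OF initials_polys_in a'(2)] polys_in_mono[OF _ VW] by blast
    show "?I ^ k * a - b \<in> ideal_in W ?S" using S by (intro ideal_in_mono[OF _ b(2)]) auto
    show "s * b - a' \<in> ideal_in W ?S" using S by (intro ideal_in_mono[OF _ a'(3)]) auto
  qed
  moreover have "degv ?u a' < degv ?u ?f"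
    using a'(5) leader_notin_vars_upto[OF C i] b(3) by fastforce
  then have "\<forall>j<Suc i. degv (leader le (C ! j)) a' < degv (leader le (C ! j)) (C ! j)"
    using a'(4) less_Suc_eq by auto
  moreover have "\<forall>w. w \<notin> vars_upto C (Suc i) \<longrightarrow> degv w a' \<le> degv w a"
    using a'(5) b(4) vars_upto_Suc[of C i] by (fastforce intro: order_trans)
  ultimately show ?case using a'(1) by blast
qed

end

context prime_ranked
begin

lemma initial_notin_P:
  assumes C_char_set: "char_set le P C" and j: "j < length C"
  shows "initial le (C ! j) \<notin> P"
proof
  assume IP: "initial le (C ! j) \<in> P"
  have C_autoreduced: "autoreduced le C" using C_char_set by (simp add: char_set_def)
  let ?f = "C ! j" let ?u = "leader le ?f" let ?e = "degv ?u ?f"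
  let ?I = "initial le ?f"
  have Ieq: "?I = coeffv ?u ?e ?f" by (simp add: initial_def)
  have e: "?e > 0" using leader_deg_pos[OF autoreduced_nonconst[OF C_autoreduced j]] .
  obtain m where m: "m \<in> keys ?f" "lookup m ?u = ?e" using degv_attained[OF e] by blast
  have m1: "lookup (m - single ?u ?e) ?u = 0" using m(2) by (simp add: lookup_minus lookup_single_if)
  have m2: "m - single ?u ?e + single ?u ?e = m"
    by (rule poly_mapping_eqI) (use m(2) in \<open>auto simp: lookup_add lookup_minus lookup_single_if\<close>)
  have "lookup ?I (m - single ?u ?e) = lookup ?f m" unfolding Ieq lookup_coeffv using m1 m2 by simp
  then have I0: "?I \<noteq> 0" using m(1) by (auto simp: in_keys_iff)
  have dI: "dvars ?I \<subseteq> dvars ?f - {?u}" unfolding Ieq by (rule dvars_coeffv)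
  have "reduced le ?I (C ! i)" if i: "i < length C" for i
  proof (cases "i = j")
    case True
    have "(fst ?u, snd ?u + s) \<notin> dvars ?I" if "s > 0" for s
      using autoreduced_no_proper_deriv[OF C_autoreduced j j that] dI by blast
    moreover have "degv ?u ?I = 0" using dI degv_notin by blast
    ultimately show ?thesis using True e by (simp add: reduced_def)
  next
    case False
    have r: "reduced le ?f (C ! i)" using autoreduced_reduced[OF C_autoreduced j i] False by simp
    have "degv (leader le (C ! i)) ?I \<le> degv (leader le (C ! i)) ?f" unfolding Ieq by (rule degv_coeffv)
    then show ?thesis using r dI by (auto simp: reduced_def)
  qed
  then show False using char_set_no_reduced_element[OF C_char_set IP I0] by blast
qed

lemma initials_disjoint_P:
  assumes C_char_set: "char_set le P C"
  shows "initial le ` set (take i C) \<inter> P = {}"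
proof -
  have "initial le c \<notin> P" if cin: "c \<in> set (take i C)" for c
  proof -
    obtain j where "j < length (take i C)" "c = take i C ! j" using cin by (auto simp: in_set_conv_nth)
    then have "j < length C" "c = C ! j" by auto
    then show ?thesis using initial_notin_P[OF C_char_set] by simp
  qed
  then show ?thesis by blast
qed

lemma reduced_if_vars_upto:
  assumes C_autoreduced: "autoreduced le C" and k: "k \<le> length C" and a: "dvars a \<subseteq> vars_upto C k"
    and m: "m < length C" and dg: "m < k \<Longrightarrow> degv (leader le (C ! m)) a < degv (leader le (C ! m)) (C ! m)"
  shows "reduced le a (C ! m)"
proof -
  have "(fst (leader le (C ! m)), snd (leader le (C ! m)) + s) \<notin> dvars a" if s: "s > 0" for s
  proof
    assume h: "(fst (leader le (C ! m)), snd (leader le (C ! m)) + s) \<in> dvars a"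
    then obtain x where x: "x < k" "(fst (leader le (C ! m)), snd (leader le (C ! m)) + s) \<in> dvars (C ! x)"
      using a by (auto simp: vars_upto_def)
    then show False using autoreduced_no_proper_deriv[OF C_autoreduced _ m s, of x] k by simp
  qed
  moreover have "degv (leader le (C ! m)) a < degv (leader le (C ! m)) (C ! m)"
  proof (cases "m < k")
    case True then show ?thesis using dg by simp
  next
    case False
    have "leader le (C ! m) \<notin> dvars a"
    proof
      assume "leader le (C ! m) \<in> dvars a"
      then obtain x where x: "x < k" "leader le (C ! m) \<in> dvars (C ! x)" using a by (auto simp: vars_upto_def)
      have "x < m" using x(1) False by simp
      then show False using autoreduced_var_less_leader[OF C_autoreduced _ m x(2)] by simp
    qed
    then have "degv (leader le (C ! m)) a = 0" by (rule degv_notin)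
    then show ?thesis using leader_deg_pos[OF autoreduced_nonconst[OF C_autoreduced m]] by simp
  qed
  ultimately show ?thesis by (simp add: reduced_def)
qed

lemma saturation_subset_P:
  assumes C: "char_set le P C"
  shows "saturation_in (vars_upto C i) (set (take i C)) (initial le ` set (take i C)) \<subseteq> P"
proof
  fix a assume "a \<in> saturation_in (vars_upto C i) (set (take i C)) (initial le ` set (take i C))"
  then obtain s where s: "s \<in> mult_closure (initial le ` set (take i C))"
      "s * a \<in> ideal_in (vars_upto C i) (set (take i C))"
    by (auto simp: saturation_in_def)
  have "set (take i C) \<subseteq> P" using C set_take_subset[of i C] by (auto simp: char_set_def)
  then have "s * a \<in> P" using s(2) ideal_in_P by blast
  moreover have "s \<notin> P" using mult_closure_notin[OF initials_disjoint_P[OF C] s(1)] .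
  ultimately show "a \<in> P" using P_prime by blast
qed

text \<open>An element of P reduces to an element of P that is reduced with respect to C,
  hence to 0.\<close>

lemma P_in_subset_saturation:
  assumes C: "char_set le P C" and i: "i \<le> length C" and a: "a \<in> P" "a \<in> polys_in (vars_upto C i)"
  shows "a \<in> saturation_in (vars_upto C i) (set (take i C)) (initial le ` set (take i C))"
proof -
  have C_ar: "autoreduced le C" and "set (take i C) \<subseteq> P"
    using C set_take_subset[of i C] by (auto simp: char_set_def)
  obtain a' s where a': "a' \<in> polys_in (vars_upto C i)" "s \<in> mult_closure (initial le ` set (take i C))"
      "s * a - a' \<in> ideal_in (vars_upto C i) (set (take i C))"
      "\<forall>j<i. degv (leader le (C ! j)) a' < degv (leader le (C ! j)) (C ! j)"
    using pseudo_reduce[OF C_ar i order_refl a(2)] by blast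
  have "s * a - a' \<in> P" using a'(3) ideal_in_P[OF \<open>set (take i C) \<subseteq> P\<close>] by blast
  then have a'P: "a' \<in> P" using P_mult[OF a(1)] P_diff_iff by blast
  have "reduced le a' (C ! m)" if "m < length C" for m
    by (rule reduced_if_vars_upto[OF C_ar i _ that]) (use a'(1,4) in \<open>auto simp: polys_in_def\<close>)
  then have "a' = 0" using char_set_no_reduced_element[OF C a'P] by blast
  then show ?thesis using a'(2,3) a(2) unfolding saturation_in_def by auto
qed

lemma saturation_eq_P_in:
  assumes "char_set le P C" and "i \<le> length C"
  shows "saturation_in (vars_upto C i) (set (take i C)) (initial le ` set (take i C)) = P \<inter> polys_in (vars_upto C i)"
  using saturation_subset_P[OF assms(1)] P_in_subset_saturation[OF assms]
  by (auto simp: saturation_in_def)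

lemma prime_ideal_in_P: "prime_ideal_in V (P \<inter> polys_in V)"
  unfolding prime_ideal_in_def using P_zero P_add P_mult P_prime P_one
  by (auto intro: polys_in_add polys_in_mult)

end

section \<open>Degrees over the coefficient ring\<close>

definition mon_deg :: "('a \<Rightarrow>\<^sub>0 nat) \<Rightarrow> nat" where
  "mon_deg a = sum (lookup a) (keys a)"

lemma mon_deg_add: "mon_deg (a + b) = mon_deg a + mon_deg b"
proof -
  have "mon_deg (a + b) = (\<Sum>v\<in>keys a \<union> keys b. lookup a v + lookup b v)"
    by (simp add: mon_deg_def keys_add_nat lookup_add)
  also have "\<dots> = (\<Sum>v\<in>keys a \<union> keys b. lookup a v) + (\<Sum>v\<in>keys a \<union> keys b. lookup b v)"
    by (simp add: sum.distrib)
  also have "(\<Sum>v\<in>keys a \<union> keys b. lookup a v) = mon_deg a"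
    unfolding mon_deg_def by (rule sum.mono_neutral_right) (auto simp: in_keys_iff)
  also have "(\<Sum>v\<in>keys a \<union> keys b. lookup b v) = mon_deg b"
    unfolding mon_deg_def by (rule sum.mono_neutral_right) (auto simp: in_keys_iff)
  finally show ?thesis .
qed

lemma additive_mon_deg: "additive mon_deg" by (simp add: additive_def mon_deg_add)

lemma additive_lookup: "additive (\<lambda>a. lookup a u)" by (simp add: additive_def lookup_add)

lemma mon_deg_0_iff: "mon_deg a = 0 \<longleftrightarrow> a = 0"
proof
  assume "mon_deg a = 0"
  then have "\<forall>v\<in>keys a. lookup a v = 0" by (simp add: mon_deg_def)
  then show "a = 0" by (auto simp: in_keys_iff poly_mapping_eq_iff fun_eq_iff)
qed (simp add: mon_deg_def)

definition deg_mod :: "('j \<times> nat) set \<Rightarrow> ('j, 'k::comm_ring_1) dpoly set \<Rightarrow> ('j, 'k) dpoly \<Rightarrow> nat" where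
  "deg_mod V J p = Max (insert 0 (mon_deg ` supp_mod V J p))"

lemma deg_mod_ge: "is_ideal_in V J \<Longrightarrow> g \<in> supp_mod V J p \<Longrightarrow> mon_deg g \<le> deg_mod V J p"
  unfolding deg_mod_def by (rule Max_ge) (auto intro: supp_mod_finite)

lemma deg_mod_le: "is_ideal_in V J \<Longrightarrow> (\<And>g. g \<in> supp_mod V J p \<Longrightarrow> mon_deg g \<le> n) \<Longrightarrow> deg_mod V J p \<le> n"
  unfolding deg_mod_def by (subst Max_le_iff) (auto intro: supp_mod_finite)

lemma deg_mod_attained:
  assumes "is_ideal_in V J" "supp_mod V J p \<noteq> {}"
  shows "\<exists>g\<in>supp_mod V J p. mon_deg g = deg_mod V J p"
proof -
  have "deg_mod V J p \<in> insert 0 (mon_deg ` supp_mod V J p)"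
    unfolding deg_mod_def by (rule Max_in) (auto intro: supp_mod_finite[OF assms(1)])
  moreover obtain g where "g \<in> supp_mod V J p" using assms(2) by blast
  moreover have "mon_deg g \<le> deg_mod V J p" using deg_mod_ge[OF assms(1) \<open>g \<in> supp_mod V J p\<close>] .
  ultimately show ?thesis by (cases "deg_mod V J p = 0") auto
qed

lemma deg_mod_cong: "supp_mod V J p = supp_mod V J q \<Longrightarrow> deg_mod V J p = deg_mod V J q"
  by (simp add: deg_mod_def)

lemma supp_mod_inner: "0 \<in> J \<Longrightarrow> g \<in> polys_in V \<Longrightarrow> supp_mod V J g \<subseteq> {0}"
  by (auto simp: supp_mod_def vcoeff_inner split: if_splits)

lemma frac_unit_char:
  assumes I: "is_ideal_in V J" and VU: "V \<inter> U = {}" and f: "f \<in> polys_in (V \<union> U)"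
  shows "frac_unit V J U f \<longleftrightarrow> supp_mod V J f \<noteq> {} \<and> supp_mod V J f \<subseteq> {0}"
proof
  assume fu: "frac_unit V J U f"
  then have "f \<notin> ideal_in (V \<union> U) J" by (simp add: frac_unit_def)
  then have ne: "supp_mod V J f \<noteq> {}" using ideal_in_char[OF I, of "V \<union> U"] f by (auto simp: coeffs_in_iff_supp_mod_empty)
  obtain g where g: "g \<in> polys_in V" "f - g \<in> ideal_in (V \<union> U) J" using fu by (auto simp: frac_unit_def)
  have "coeffs_in V J (f - g)" using g(2) ideal_in_char[OF I, of "V \<union> U"] by simp
  then have eq: "supp_mod V J f = supp_mod V J g" by (rule supp_mod_cong[OF I])
  have "supp_mod V J g \<subseteq> {0}" by (rule supp_mod_inner[OF is_ideal_in_zero[OF I] g(1)])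
  then show "supp_mod V J f \<noteq> {} \<and> supp_mod V J f \<subseteq> {0}" using ne eq by simp
next
  assume h: "supp_mod V J f \<noteq> {} \<and> supp_mod V J f \<subseteq> {0}"
  have "f \<notin> ideal_in (V \<union> U) J" using h ideal_in_char[OF I, of "V \<union> U"] by (auto simp: coeffs_in_iff_supp_mod_empty)
  moreover have "\<exists>g \<in> polys_in V. f - g \<in> ideal_in (V \<union> U) J"
  proof (intro bexI)
    let ?g = "vcoeff V f 0"
    show "?g \<in> polys_in V" by (rule vcoeff_polys_in)
    have "coeffs_in V J (f - ?g)"
      unfolding coeffs_in_def
    proof (intro allI impI)
      fix c :: "_ \<Rightarrow>\<^sub>0 nat" assume cV: "keys c \<inter> V = {}"
      have kg: "vcoeff V ?g c = (if c = 0 then ?g else 0)" by (rule vcoeff_inner[OF vcoeff_polys_in cV])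
      show "vcoeff V (f - ?g) c \<in> J"
      proof (cases "c = 0")
        case True then show ?thesis using kg is_ideal_in_zero[OF I] by (simp add: vcoeff_diff)
      next
        case False
        then have "c \<notin> supp_mod V J f" using h by auto
        then have "vcoeff V f c \<in> J" using cV by (simp add: supp_mod_def)
        then show ?thesis using kg False by (simp add: vcoeff_diff)
      qed
    qed
    moreover have "f - ?g \<in> polys_in (V \<union> U)"
      using f polys_in_mono[OF vcoeff_polys_in[of V f 0]] by (auto intro: polys_in_diff)
    ultimately show "f - ?g \<in> ideal_in (V \<union> U) J" using ideal_in_char[OF I, of "V \<union> U"] by simp
  qed
  ultimately show "frac_unit V J U f" by (simp add: frac_unit_def)
qed

lemma vcoeff_coeffv:
  assumes u: "u \<notin> V"
  shows "vcoeff V (coeffv u d f) c = (if lookup c u = 0 then vcoeff V f (c + single u d) else 0)"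
proof (rule poly_mapping_eqI)
  fix m
  show "lookup (vcoeff V (coeffv u d f) c) m = lookup (if lookup c u = 0 then vcoeff V f (c + single u d) else 0) m"
  proof (cases "keys m \<subseteq> V")
    case True
    then have "lookup m u = 0" using u by (auto simp: in_keys_iff)
    then show ?thesis using True by (simp add: lookup_vcoeff lookup_coeffv lookup_add add.assoc)
  qed (simp add: lookup_vcoeff)
qed

lemma vcoeff_pderivv:
  assumes v: "v \<notin> V"
  shows "vcoeff V (pderivv v f) c = of_nat (lookup c v + 1) * vcoeff V f (c + single v 1)"
proof (rule poly_mapping_eqI)
  fix m
  show "lookup (vcoeff V (pderivv v f) c) m = lookup (of_nat (lookup c v + 1) * vcoeff V f (c + single v 1)) m"
  proof (cases "keys m \<subseteq> V")
    case True
    then have "lookup m v = 0" using v by (auto simp: in_keys_iff)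
    then show ?thesis using True
      by (simp add: lookup_vcoeff lookup_pderivv lookup_add add.assoc of_nat_single lookup_single_mult)
  next
    case False
    then show ?thesis by (simp add: lookup_vcoeff of_nat_single lookup_single_mult)
  qed
qed

definition drop_mod :: "('j \<times> nat) set \<Rightarrow> ('j, 'k::comm_ring_1) dpoly set \<Rightarrow> ('j, 'k) dpoly \<Rightarrow> ('j, 'k) dpoly" where
  "drop_mod V J p = outer_filter V (\<lambda>c. vcoeff V p c \<notin> J) p"

lemma supp_mod_drop_mod: "0 \<in> J \<Longrightarrow> supp_mod V J (drop_mod V J p) = supp_mod V J p"
  unfolding supp_mod_def drop_mod_def by (auto simp: vcoeff_outer_filter)

lemma coeffs_in_diff_drop_mod: assumes I: "is_ideal_in V J" shows "coeffs_in V J (p - drop_mod V J p)"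
proof -
  have e: "p - drop_mod V J p = outer_filter V (\<lambda>c. \<not> vcoeff V p c \<notin> J) p"
    using outer_filter_split[of V "\<lambda>c. vcoeff V p c \<notin> J" p] unfolding drop_mod_def by (simp add: algebra_simps)
  show ?thesis unfolding coeffs_in_def e by (auto simp: vcoeff_outer_filter is_ideal_in_zero[OF I])
qed

lemma keys_drop_mod: "m \<in> keys (drop_mod V J p) \<Longrightarrow> m \<in> keys p \<and> vcoeff V p (outer V m) \<notin> J"
  unfolding drop_mod_def by (rule keys_outer_filter)

lemma dvars_drop_mod: "dvars (drop_mod V J p) \<subseteq> dvars p"
  unfolding drop_mod_def by (rule dvars_outer_filter)

lemma degv_drop_mod: "degv w (drop_mod V J p) \<le> degv w p"
  by (rule degv_le) (use keys_drop_mod degv_ge in blast)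

lemma keys_drop_mod_supp_mod: "m \<in> keys (drop_mod V J p) \<Longrightarrow> outer V m \<in> supp_mod V J p"
  using keys_drop_mod[of m V J p] by (auto simp: supp_mod_def keys_outer)

lemma card_drop_mod:
  assumes "m \<in> keys p" "vcoeff V p (outer V m) \<in> J"
  shows "card (keys (drop_mod V J p)) < card (keys p)"
proof (rule psubset_card_mono)
  show "finite (keys p)" by simp
  show "keys (drop_mod V J p) \<subset> keys p" using keys_drop_mod assms by blast
qed

lemma supp_mod_zero: "is_ideal_in V J \<Longrightarrow> supp_mod V J 0 = {}"
  by (simp add: supp_mod_def is_ideal_in_zero)

lemma lookup_outer_notin: "u \<notin> V \<Longrightarrow> lookup (outer V m) u = lookup m u"
  by (simp add: lookup_outer)

lemma supp_mod_lookup_le_degv: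
  assumes I: "is_ideal_in V J" and u: "u \<notin> V" and g: "g \<in> supp_mod V J p"
  shows "lookup g u \<le> degv u p"
proof -
  obtain m where "m \<in> keys p" "g = outer V m" using supp_mod_subset[OF I] g by blast
  then show ?thesis using lookup_outer_notin[OF u] degv_ge by metis
qed

lemma coeffs_in_ideal_subset:
  assumes "is_ideal_in V J" "J \<subseteq> P'" "coeffs_in V J p" "0 \<in> P'" "\<And>a b. a \<in> P' \<Longrightarrow> b \<in> P' \<Longrightarrow> a + b \<in> P'"
    "\<And>a r. a \<in> P' \<Longrightarrow> r * a \<in> P'"
  shows "p \<in> P'"
proof -
  have "p \<in> ideal_in UNIV J" using ideal_in_char[OF assms(1), of UNIV] assms(3) by (simp add: polys_in_def)
  moreover have "ideal_in UNIV J \<subseteq> P'" by (rule ideal_in_sub_ideal) (use assms in auto)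
  ultimately show ?thesis by blast
qed

lemma mon_deg_single: "mon_deg (single v n) = n"
  by (cases "n = 0") (simp_all add: mon_deg_def)

lemma supp_mod_subset_zero_if_deg_mod_zero:
  "is_ideal_in V J \<Longrightarrow> deg_mod V J p = 0 \<Longrightarrow> supp_mod V J p \<subseteq> {0}"
  using deg_mod_ge mon_deg_0_iff by fastforce

lemma frac_unit_if_deg_mod_zero:
  assumes "is_ideal_in V J" "V \<inter> U = {}" "h \<in> polys_in (V \<union> U)"
    and "supp_mod V J h \<noteq> {}" "deg_mod V J h = 0"
  shows "frac_unit V J U h"
  using assms frac_unit_char supp_mod_subset_zero_if_deg_mod_zero by blast

lemma of_nat_Suc_mult_mem_iff:
  fixes x :: "('j, 'k::field_char_0) dpoly"
  assumes J: "is_ideal_in V J" and x: "x \<in> polys_in V"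
  shows "of_nat (Suc n) * x \<in> J \<longleftrightarrow> x \<in> J"
proof
  have n: "(of_nat (Suc n) :: ('j, 'k) dpoly) = dConst (of_nat (Suc n))"
    by (simp add: dConst_def of_nat_single)
  have inv: "inverse (of_nat (Suc n)) * of_nat (Suc n) = (1::'k)" by (rule left_inverse, rule of_nat_neq_0)
  assume "of_nat (Suc n) * x \<in> J"
  then have "dConst (inverse (of_nat (Suc n))) * (of_nat (Suc n) * x) \<in> J"
    by (rule is_ideal_in_mult[OF J]) (simp add: polys_in_def dConst_def dvars_def)
  moreover have "dConst (inverse (of_nat (Suc n))) * (of_nat (Suc n) * x) = x"
    unfolding n mult.assoc[symmetric] dConst_mult inv dConst_one by (rule mult_1_left)
  ultimately show "x \<in> J" by simp
next
  assume "x \<in> J"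
  moreover have "(of_nat (Suc n) :: ('j, 'k) dpoly) \<in> polys_in V"
    by (simp add: polys_in_def dvars_def of_nat_single)
  ultimately show "of_nat (Suc n) * x \<in> J"
    using is_ideal_in_mult[OF J] by (simp add: mult.commute)
qed

lemma supp_mod_pderivv_iff:
  fixes f :: "('j, 'k::field_char_0) dpoly"
  assumes J: "is_ideal_in V J" and v: "v \<notin> V" and c: "keys c \<inter> V = {}"
  shows "c \<in> supp_mod V J (pderivv v f) \<longleftrightarrow> c + single v 1 \<in> supp_mod V J f"
proof -
  have "keys (c + single v 1) \<inter> V = {}" using c v keys_add_nat[of c "single v 1"] by auto
  moreover have "vcoeff V (pderivv v f) c \<in> J \<longleftrightarrow> vcoeff V f (c + single v 1) \<in> J"
    unfolding vcoeff_pderivv[OF v] Suc_eq_plus1[symmetric]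
    by (rule of_nat_Suc_mult_mem_iff[OF J vcoeff_polys_in])
  ultimately show ?thesis using c by (simp add: supp_mod_def)
qed

lemma prime_ideal_in_empty_zero: "prime_ideal_in {} ({0} :: ('j, 'k::field) dpoly set)"
proof -
  have "a = 0 \<or> b = 0"
    if a: "a \<in> polys_in {}" and b: "b \<in> polys_in {}" and ab: "a * b = 0" for a b :: "('j, 'k) dpoly"
  proof -
    have "dvars a = {}" "dvars b = {}" using a b by (auto simp: polys_in_def)
    then obtain x y where xy: "a = dConst x" "b = dConst y" using dConst_lookup_zero by blast
    then have "lookup (dConst (x * y) :: ('j, 'k) dpoly) 0 = 0" using ab by (simp add: dConst_mult)
    then have "x = 0 \<or> y = 0" by (simp add: dConst_def)
    then show ?thesis using xy by (auto simp: dConst_zero)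
  qed
  then show ?thesis by (auto simp: prime_ideal_in_def polys_in_def)
qed

lemma supp_mod_empty_zero: "supp_mod {} {0} p = keys p"
proof -
  have "vcoeff {} p c = 0 \<longleftrightarrow> lookup p c = 0" for c
  proof
    assume "vcoeff {} p c = 0"
    then have "lookup (vcoeff {} p c) 0 = 0" by simp
    then show "lookup p c = 0" by (simp add: lookup_vcoeff)
  next
    assume "lookup p c = 0"
    then show "vcoeff {} p c = 0" by (intro poly_mapping_eqI) (auto simp: lookup_vcoeff)
  qed
  then have "c \<in> supp_mod {} {0} p \<longleftrightarrow> c \<in> keys p" for c
    by (simp add: supp_mod_def in_keys_iff)
  then show ?thesis by blast
qed

lemma dvars_factor:
  fixes a b :: "('j::countable, 'k::field) dpoly"
  assumes a0: "a \<noteq> 0" and b0: "b \<noteq> 0"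
  shows "dvars a \<subseteq> dvars (a * b)"
proof
  fix w assume "w \<in> dvars a"
  then obtain m where m: "m \<in> keys a" "w \<in> keys m" by (auto simp: dvars_def)
  have "supp_mod {} {0} a \<noteq> {}" "supp_mod {} {0} b \<noteq> {}"
    using a0 b0 by (simp_all add: supp_mod_empty_zero)
  then obtain a1 b1 where "a1 \<in> supp_mod {} {0} a" "\<forall>x\<in>supp_mod {} {0} a. lookup x w \<le> lookup a1 w"
      "a1 + b1 \<in> supp_mod {} {0} (a * b)"
    using supp_mod_mult_top[OF prime_ideal_in_empty_zero additive_lookup[of w]] by blast
  then have ab1: "a1 \<in> keys a" "\<forall>x\<in>keys a. lookup x w \<le> lookup a1 w" "a1 + b1 \<in> keys (a * b)"
    by (simp_all add: supp_mod_empty_zero)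
  have "lookup a1 w > 0" using ab1(2) m by (fastforce simp: in_keys_iff)
  then have "w \<in> keys (a1 + b1)" by (simp add: in_keys_iff lookup_add)
  then show "w \<in> dvars (a * b)" using ab1(3) by (auto simp: dvars_def)
qed

lemma const_dvd_one:
  fixes b :: "('j, 'k::field) dpoly"
  assumes "dvars b = {}" "b \<noteq> 0"
  shows "b dvd 1"
proof -
  have b: "b = dConst (lookup b 0)" by (rule dConst_lookup_zero[OF assms(1)])
  then have "lookup b 0 \<noteq> 0" using assms(2) dConst_zero by metis
  then have "b * dConst (inverse (lookup b 0)) = 1"
    by (subst b) (simp add: dConst_mult dConst_one)
  then show ?thesis by (metis dvdI)
qed

lemma nonconst_not_dvd_one:
  fixes f :: "('j::countable, 'k::field) dpoly"
  assumes "nonconst f"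
  shows "\<not> f dvd 1"
proof
  assume "f dvd 1"
  then obtain x where x: "1 = f * x" by (auto elim: dvdE)
  then have "f \<noteq> 0" "x \<noteq> 0" by auto
  then have "supp_mod {} {0} f \<noteq> {}" "supp_mod {} {0} x \<noteq> {}"
    by (simp_all add: supp_mod_empty_zero)
  then obtain a1 b1 where "a1 \<in> supp_mod {} {0} f" "\<forall>y\<in>supp_mod {} {0} f. mon_deg y \<le> mon_deg a1"
      "a1 + b1 \<in> supp_mod {} {0} (f * x)"
    using supp_mod_mult_top[OF prime_ideal_in_empty_zero additive_mon_deg] by blast
  then have ab1: "\<forall>y\<in>keys f. mon_deg y \<le> mon_deg a1" "a1 + b1 \<in> keys (f * x)"
    by (simp_all add: supp_mod_empty_zero)
  have "a1 + b1 = 0" using ab1(2) x[symmetric] by (simp split: if_splits)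
  then have "mon_deg a1 = 0" using mon_deg_add[of a1 b1] by (simp add: mon_deg_def)
  then have "\<forall>y\<in>keys f. y = 0" using ab1(1) mon_deg_0_iff by (metis le_zero_eq)
  then show False using assms by (auto simp: nonconst_def dvars_def)
qed

lemma dvars_empty_if_deg_mod_zero:
  fixes p :: "('j, 'k::field) dpoly"
  assumes "deg_mod {} {0} p = 0"
  shows "dvars p = {}"
proof -
  have "keys p \<subseteq> {0}"
    using supp_mod_subset_zero_if_deg_mod_zero[OF prime_ideal_in_is_ideal_in[OF prime_ideal_in_empty_zero] assms]
    by (simp add: supp_mod_empty_zero)
  then show ?thesis by (auto simp: dvars_def)
qed

section \<open>A characteristic set of minimal measure\<close>

context prime_ranked
begin

abbreviation P_in :: "('j \<times> nat) set \<Rightarrow> ('j, 'k) dpoly set" where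
  "P_in V \<equiv> P \<inter> polys_in V"

lemma is_ideal_in_P_in: "is_ideal_in V (P_in V)"
  using prime_ideal_in_P by (rule prime_ideal_in_is_ideal_in)

lemma zero_P_in: "0 \<in> P_in V" using P_zero by simp

lemma coeffs_in_P_in_imp_P: "coeffs_in V (P_in V) p \<Longrightarrow> p \<in> P"
  by (rule coeffs_in_ideal_subset[OF is_ideal_in_P_in]) (auto intro: P_zero P_add P_mult)

definition elem_measure :: "('j \<times> nat) set \<Rightarrow> ('j, 'k) dpoly \<Rightarrow> nat \<times> nat" where
  "elem_measure V p = (deg_mod V (P_in V) p, card (keys p))"

definition char_measure :: "('j, 'k) dpoly list \<Rightarrow> (nat \<times> nat) list" where
  "char_measure C = map (\<lambda>i. elem_measure (vars_upto C i) (C ! i)) [0..<length C]"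

definition measure_less :: "((nat \<times> nat) list \<times> (nat \<times> nat) list) set" where
  "measure_less = lenlex {(x, y). x < y}"

lemma exists_measure_minimal_char_set:
  obtains C where "char_set le P C"
    "\<And>C'. char_set le P C' \<Longrightarrow> (char_measure C', char_measure C) \<notin> measure_less"
proof -
  obtain C0 where "char_set le P C0" using exists_char_set by blast
  moreover have "wf (inv_image measure_less char_measure)"
    unfolding measure_less_def by (intro wf_inv_image wf_lenlex wf)
  ultimately obtain C where "C \<in> {C. char_set le P C}"
      "\<And>C'. (C', C) \<in> inv_image measure_less char_measure \<Longrightarrow> C' \<notin> {C. char_set le P C}"
    using wfE_min[of _ C0 "{C. char_set le P C}"] by blast
  then show ?thesis using that by auto
qed

lemma vars_upto_update: "j \<le> i \<Longrightarrow> vars_upto (C[i := a]) j = vars_upto C j"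
  by (auto simp: vars_upto_def nth_list_update)

lemma char_measure_update_less:
  assumes i: "i < length C" and less: "elem_measure (vars_upto C i) a < elem_measure (vars_upto C i) (C ! i)"
  shows "(char_measure (C[i := a]), char_measure C) \<in> measure_less"
proof -
  let ?C = "C[i := a]"
  have len: "length (char_measure ?C) = length C" "length (char_measure C) = length C"
    by (simp_all add: char_measure_def)
  have "take i (char_measure ?C) = take i (char_measure C)"
    using vars_upto_update[of _ i C a] by (intro nth_equalityI) (auto simp: char_measure_def)
  moreover have "char_measure ?C ! i < char_measure C ! i"
  proof -
    have "char_measure ?C ! i = elem_measure (vars_upto C i) a"
      using i by (simp add: char_measure_def vars_upto_update)
    moreover have "char_measure C ! i = elem_measure (vars_upto C i) (C ! i)"
      using i by (simp add: char_measure_def)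
    ultimately show ?thesis using less by simp
  qed
  ultimately have "(char_measure ?C, char_measure C) \<in> lex {(x, y). x < y}"
    using i len by (intro lex_at_index) simp_all
  then show ?thesis unfolding measure_less_def lenlex_conv using len by simp
qed

end

locale minimal_char_set = prime_ranked le P
  for le :: "'j::finite \<times> nat \<Rightarrow> 'j \<times> nat \<Rightarrow> bool" and P :: "('j, 'k::field_char_0) dpoly set" +
  fixes C :: "('j, 'k) dpoly list"
  assumes C_char_set: "char_set le P C"
    and C_minimal: "\<And>C'. char_set le P C' \<Longrightarrow> (char_measure C', char_measure C) \<notin> measure_less"
begin

abbreviation Vs :: "nat \<Rightarrow> ('j \<times> nat) set" where "Vs i \<equiv> vars_upto C i"
abbreviation supp_P :: "nat \<Rightarrow> ('j, 'k) dpoly \<Rightarrow> ('j \<times> nat \<Rightarrow>\<^sub>0 nat) set" where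
  "supp_P i p \<equiv> supp_mod (Vs i) (P_in (Vs i)) p"
abbreviation deg_P :: "nat \<Rightarrow> ('j, 'k) dpoly \<Rightarrow> nat" where
  "deg_P i p \<equiv> deg_mod (Vs i) (P_in (Vs i)) p"
abbreviation ldr :: "nat \<Rightarrow> 'j \<times> nat" where "ldr i \<equiv> leader le (C ! i)"
abbreviation ldeg :: "nat \<Rightarrow> nat" where "ldeg i \<equiv> degv (ldr i) (C ! i)"

lemma C_autoreduced: "autoreduced le C" using C_char_set by (simp add: char_set_def)
lemma C_in_P: "i < length C \<Longrightarrow> C ! i \<in> P" using C_char_set by (auto simp: char_set_def)

text \<open>The hypotheses say that a could take the place of C_i in C.\<close>

lemma no_improving_element:
  assumes i: "i < length C" and aP: "a \<in> P" and aW: "a \<in> polys_in (Vs (Suc i))"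
    and below: "\<forall>j<i. degv (ldr j) a < ldeg j"
    and supp: "supp_P i a \<noteq> {}" and deg: "degv (ldr i) a \<le> ldeg i"
    and less: "elem_measure (Vs i) a < elem_measure (Vs i) (C ! i)"
  shows False
proof -
  have red: "reduced le a (C ! m)" if "m < length C" "m \<noteq> i" for m
    by (rule reduced_if_vars_upto[OF C_autoreduced _ _ that(1)])
      (use i aW below that in \<open>auto simp: polys_in_def\<close>)
  have "a \<noteq> 0" using supp supp_mod_zero[OF is_ideal_in_P_in] by auto
  then have "\<not> reduced le a (C ! i)"
    using char_set_no_reduced_element[OF C_char_set aP] red i by (metis linorder_neqE_nat)
  then have "nonconst a \<and> rank a = rank (C ! i)"
    using rank_eq_if_not_reduced[OF C_autoreduced i _ deg] aW by (simp add: polys_in_def)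
  then have "char_set le P (C[i := a])"
    using char_set_update[OF C_char_set i aP] red by blast
  moreover have "(char_measure (C[i := a]), char_measure C) \<in> measure_less"
    by (rule char_measure_update_less[OF i less])
  ultimately show False using C_minimal by blast
qed

lemma supp_P_char_set_nonempty:
  assumes i: "i < length C"
  shows "supp_P i (C ! i) \<noteq> {}"
proof
  assume empty: "supp_P i (C ! i) = {}"
  have u: "ldr i \<notin> Vs i" by (rule leader_notin_vars_upto[OF C_autoreduced i])
  have "coeffs_in (Vs i) (P_in (Vs i)) (initial le (C ! i))"
    unfolding coeffs_in_def
  proof (intro allI impI)
    fix c :: "_ \<Rightarrow>\<^sub>0 nat" assume c: "keys c \<inter> Vs i = {}"
    then have "keys (c + single (ldr i) (ldeg i)) \<inter> Vs i = {}"
      using u keys_add_nat[of c "single (ldr i) (ldeg i)"] by auto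
    then show "vcoeff (Vs i) (initial le (C ! i)) c \<in> P_in (Vs i)"
      using empty P_zero by (auto simp: supp_mod_def initial_def vcoeff_coeffv[OF u])
  qed
  then have "initial le (C ! i) \<in> P" by (rule coeffs_in_P_in_imp_P)
  then show False using initial_notin_P[OF C_char_set i] by simp
qed

text \<open>Otherwise dropping these terms would give a replacement of C_i with fewer terms.\<close>

lemma vcoeff_char_set_notin:
  assumes i: "i < length C" and m: "m \<in> keys (C ! i)"
  shows "vcoeff (Vs i) (C ! i) (outer (Vs i) m) \<notin> P_in (Vs i)"
proof
  assume bad: "vcoeff (Vs i) (C ! i) (outer (Vs i) m) \<in> P_in (Vs i)"
  let ?a = "drop_mod (Vs i) (P_in (Vs i)) (C ! i)"
  have "C ! i - ?a \<in> P"
    by (rule coeffs_in_P_in_imp_P[OF coeffs_in_diff_drop_mod[OF is_ideal_in_P_in]])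
  then have aP: "?a \<in> P" using C_in_P[OF i] P_diff_iff by blast
  have aW: "?a \<in> polys_in (Vs (Suc i))"
    using dvars_drop_mod[of "Vs i" "P_in (Vs i)" "C ! i"] vars_upto_Suc[of C i] by (auto simp: polys_in_def)
  have "degv (ldr j) ?a < ldeg j" if j: "j < i" for j
  proof -
    have "reduced le (C ! i) (C ! j)" using autoreduced_reduced[OF C_autoreduced i] j i by simp
    then have "degv (ldr j) (C ! i) < ldeg j" by (simp add: reduced_def)
    then show ?thesis using degv_drop_mod[of "ldr j" "Vs i" "P_in (Vs i)" "C ! i"] by linarith
  qed
  moreover have supp: "supp_P i ?a = supp_P i (C ! i)" by (rule supp_mod_drop_mod[OF zero_P_in])
  moreover have "degv (ldr i) ?a \<le> ldeg i" by (rule degv_drop_mod)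
  moreover have "elem_measure (Vs i) ?a < elem_measure (Vs i) (C ! i)"
    using deg_mod_cong[OF supp] card_drop_mod[OF m bad] by (simp add: elem_measure_def)
  ultimately show False
    using no_improving_element[OF i aP aW] supp_P_char_set_nonempty[OF i] by simp
qed

text \<open>Pseudo-reduction by C_0, ..., C_(i-1), followed by dropping the terms whose coefficients
  lie in P, turns an element of P into a candidate replacement of C_i with the same support
  over k[V_i]/P.\<close>

lemma exists_reduced_representative:
  assumes i: "i < length C" and gP: "g \<in> P" and gW: "g \<in> polys_in (Vs (Suc i))"
  obtains a where "a \<in> P" "a \<in> polys_in (Vs (Suc i))" "supp_P i a = supp_P i g"
    "\<forall>j<i. degv (ldr j) a < ldeg j" "\<forall>m\<in>keys a. outer (Vs i) m \<in> supp_P i g"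
proof -
  let ?V = "Vs i" let ?J = "P_in (Vs i)"
  have VW: "?V \<subseteq> Vs (Suc i)" by (rule vars_upto_mono) simp
  obtain a' s where a': "a' \<in> polys_in (Vs (Suc i))" "s \<in> mult_closure (initial le ` set (take i C))"
      "s * g - a' \<in> ideal_in (Vs (Suc i)) (set (take i C))" "\<forall>j<i. degv (ldr j) a' < ldeg j"
    using pseudo_reduce[OF C_autoreduced _ VW gW] i by fastforce
  have sV: "s \<in> polys_in ?V" by (rule mult_closure_polys[OF initials_polys_in a'(2)])
  have sP: "s \<notin> P" by (rule mult_closure_notin[OF initials_disjoint_P[OF C_char_set] a'(2)])
  have "set (take i C) \<subseteq> ?J"
    using set_take_polys_in[of i C] set_take_subset[of i C] C_char_set by (auto simp: char_set_def)
  then have "s * g - a' \<in> ideal_in (Vs (Suc i)) ?J" by (rule ideal_in_mono[OF _ a'(3)])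
  then have diff: "coeffs_in ?V ?J (s * g - a')" using ideal_in_char[OF is_ideal_in_P_in VW] by simp
  have "supp_mod ?V ?J a' = supp_mod ?V ?J (s * g)" by (rule supp_mod_cong[OF is_ideal_in_P_in diff, symmetric])
  also have "\<dots> = supp_P i g" by (rule supp_mod_mult_inner[OF prime_ideal_in_P sV]) (use sP in blast)
  finally have supp: "supp_mod ?V ?J a' = supp_P i g" .
  have "s * g - a' \<in> P" by (rule coeffs_in_P_in_imp_P[OF diff])
  then have a'P: "a' \<in> P" using P_mult[OF gP] P_diff_iff by blast
  let ?a = "drop_mod ?V ?J a'"
  have "a' - ?a \<in> P" by (rule coeffs_in_P_in_imp_P[OF coeffs_in_diff_drop_mod[OF is_ideal_in_P_in]])
  then have "?a \<in> P" using a'P P_diff_iff by blast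
  moreover have "?a \<in> polys_in (Vs (Suc i))" using dvars_drop_mod[of ?V ?J a'] a'(1) by (auto simp: polys_in_def)
  moreover have "supp_mod ?V ?J ?a = supp_P i g" using supp by (simp add: supp_mod_drop_mod[OF zero_P_in])
  moreover have "\<forall>j<i. degv (ldr j) ?a < ldeg j" using a'(4) degv_drop_mod le_less_trans by blast
  moreover have "\<forall>m\<in>keys ?a. outer ?V m \<in> supp_P i g" using keys_drop_mod_supp_mod supp by blast
  ultimately show ?thesis using that by blast
qed

lemma no_supp_P_descent:
  assumes i: "i < length C" and gP: "g \<in> P" and gW: "g \<in> polys_in (Vs (Suc i))"
    and supp: "supp_P i g \<noteq> {}" and deg: "\<forall>c\<in>supp_P i g. lookup c (ldr i) \<le> ldeg i"
    and less: "deg_P i g < deg_P i (C ! i)"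
  shows False
proof -
  obtain a where a: "a \<in> P" "a \<in> polys_in (Vs (Suc i))" "supp_P i a = supp_P i g"
      "\<forall>j<i. degv (ldr j) a < ldeg j" "\<forall>m\<in>keys a. outer (Vs i) m \<in> supp_P i g"
    using exists_reduced_representative[OF i gP gW] by blast
  have "degv (ldr i) a \<le> ldeg i"
  proof (rule degv_le)
    fix m assume "m \<in> keys a"
    then have "lookup (outer (Vs i) m) (ldr i) \<le> ldeg i" using a(5) deg by blast
    then show "lookup m (ldr i) \<le> ldeg i"
      using lookup_outer_notin[OF leader_notin_vars_upto[OF C_autoreduced i]] by simp
  qed
  moreover have "elem_measure (Vs i) a < elem_measure (Vs i) (C ! i)"
    using less deg_mod_cong[OF a(3)] by (simp add: elem_measure_def)
  ultimately show False using no_improving_element[OF i a(1,2,4)] a(3) supp by simp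
qed

text \<open>A factor in P of C_i forces the cofactor to have degree 0 over k[V_i]/P: otherwise the
  factor in P has smaller degree, while its degree in the leader stays bounded by that of C_i,
  since degrees add over the domain k[V_i]/P.\<close>

lemma cofactor_deg_P_zero:
  assumes i: "i < length C" and gW: "g \<in> polys_in (Vs (Suc i))" and gP: "g \<in> P"
    and eq: "supp_P i (g * h) = supp_P i (C ! i)" and h: "supp_P i h \<noteq> {}"
  shows "deg_P i h = 0"
proof (rule ccontr)
  assume h_pos: "deg_P i h \<noteq> 0"
  have I: "is_ideal_in (Vs i) (P_in (Vs i))" by (rule is_ideal_in_P_in)
  have g: "supp_P i g \<noteq> {}"
  proof
    assume "supp_P i g = {}"
    then have "coeffs_in (Vs i) (P_in (Vs i)) (h * g)"
      by (intro coeffs_in_mult[OF I]) (simp add: coeffs_in_iff_supp_mod_empty)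
    then show False
      using eq supp_P_char_set_nonempty[OF i] by (simp add: coeffs_in_iff_supp_mod_empty mult.commute)
  qed
  obtain a0 b0 where ab0: "a0 \<in> supp_P i g" "b0 \<in> supp_P i h"
      "\<forall>a\<in>supp_P i g. mon_deg a \<le> mon_deg a0" "\<forall>b\<in>supp_P i h. mon_deg b \<le> mon_deg b0"
      "a0 + b0 \<in> supp_P i (g * h)"
    using supp_mod_mult_top[OF prime_ideal_in_P additive_mon_deg g h] by blast
  have "deg_P i g = mon_deg a0" "deg_P i h = mon_deg b0"
    using ab0 deg_mod_le[OF I] deg_mod_ge[OF I] by (metis order_antisym)+
  moreover have "mon_deg (a0 + b0) \<le> deg_P i (C ! i)" using deg_mod_ge[OF I] ab0(5) eq by simp
  ultimately have less: "deg_P i g < deg_P i (C ! i)" using h_pos by (simp add: mon_deg_add)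
  obtain a1 b1 where ab1: "\<forall>a\<in>supp_P i g. lookup a (ldr i) \<le> lookup a1 (ldr i)"
      "a1 + b1 \<in> supp_P i (g * h)"
    using supp_mod_mult_top[OF prime_ideal_in_P additive_lookup g h] by blast
  have "lookup (a1 + b1) (ldr i) \<le> ldeg i"
    using supp_mod_lookup_le_degv[OF I leader_notin_vars_upto[OF C_autoreduced i]] ab1(2) eq by simp
  then have "\<forall>c\<in>supp_P i g. lookup c (ldr i) \<le> ldeg i"
    using ab1(1) by (fastforce simp: lookup_add)
  then show False by (rule no_supp_P_descent[OF i gP gW g _ less])
qed

lemma cofactor_frac_unit:
  assumes i: "i < length C" and g: "g \<in> polys_in (Vs (Suc i))" and h: "h \<in> polys_in (Vs (Suc i))"
    and gP: "g \<in> P" and eq: "supp_P i (g * h) = supp_P i (C ! i)"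
  shows "frac_unit (Vs i) (P_in (Vs i)) (dvars (C ! i) - Vs i) h"
proof (rule frac_unit_if_deg_mod_zero[OF is_ideal_in_P_in])
  show "Vs i \<inter> (dvars (C ! i) - Vs i) = {}" by blast
  show "h \<in> polys_in (Vs i \<union> (dvars (C ! i) - Vs i))" using h vars_upto_Suc[of C i] by simp
  show h_supp: "supp_P i h \<noteq> {}"
  proof
    assume "supp_P i h = {}"
    then have "coeffs_in (Vs i) (P_in (Vs i)) (g * h)"
      by (intro coeffs_in_mult[OF is_ideal_in_P_in]) (simp add: coeffs_in_iff_supp_mod_empty)
    then show False using eq supp_P_char_set_nonempty[OF i] by (simp add: coeffs_in_iff_supp_mod_empty)
  qed
  show "deg_P i h = 0" by (rule cofactor_deg_P_zero[OF i g gP eq h_supp])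
qed

lemma char_set_not_frac_unit:
  assumes i: "i < length C"
  shows "\<not> frac_unit (Vs i) (P_in (Vs i)) (dvars (C ! i) - Vs i) (C ! i)"
proof
  assume "frac_unit (Vs i) (P_in (Vs i)) (dvars (C ! i) - Vs i) (C ! i)"
  then have sub: "supp_P i (C ! i) \<subseteq> {0}"
    using frac_unit_char[OF is_ideal_in_P_in, of "Vs i" "dvars (C ! i) - Vs i" "C ! i"]
    by (auto simp: polys_in_def)
  have e: "ldeg i > 0" using leader_deg_pos[OF autoreduced_nonconst[OF C_autoreduced i]] .
  obtain m where m: "m \<in> keys (C ! i)" "lookup m (ldr i) = ldeg i" using degv_attained[OF e] by blast
  have "outer (Vs i) m \<in> supp_P i (C ! i)"
    using vcoeff_char_set_notin[OF i m(1)] by (auto simp: supp_mod_def keys_outer)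
  moreover have "lookup (outer (Vs i) m) (ldr i) = ldeg i"
    using m(2) lookup_outer_notin[OF leader_notin_vars_upto[OF C_autoreduced i]] by simp
  ultimately show False using sub e by auto
qed

lemma irreducible_over_frac_char_set:
  assumes i: "i < length C"
  shows "irreducible_over_frac (Vs i) (P_in (Vs i)) (dvars (C ! i) - Vs i) (C ! i)"
proof -
  let ?U = "dvars (C ! i) - Vs i"
  have I: "is_ideal_in (Vs i) (P_in (Vs i))" by (rule is_ideal_in_P_in)
  have VU: "Vs i \<union> ?U = Vs (Suc i)" using vars_upto_Suc[of C i] by blast
  have "C ! i \<notin> ideal_in (Vs i \<union> ?U) (P_in (Vs i))"
    using ideal_in_char[OF I, of "Vs i \<union> ?U"] supp_P_char_set_nonempty[OF i]
    by (simp add: coeffs_in_iff_supp_mod_empty)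
  moreover have "frac_unit (Vs i) (P_in (Vs i)) ?U g \<or> frac_unit (Vs i) (P_in (Vs i)) ?U h"
    if g: "g \<in> polys_in (Vs i \<union> ?U)" and h: "h \<in> polys_in (Vs i \<union> ?U)"
      and d: "d \<in> polys_in (Vs i) - P_in (Vs i)"
      and fac: "d * (C ! i) - g * h \<in> ideal_in (Vs i \<union> ?U) (P_in (Vs i))" for g h d
  proof -
    have diff: "coeffs_in (Vs i) (P_in (Vs i)) (d * (C ! i) - g * h)"
      using fac ideal_in_char[OF I, of "Vs i \<union> ?U"] by simp
    have "supp_P i (g * h) = supp_P i (d * (C ! i))" by (rule supp_mod_cong[OF I diff, symmetric])
    also have "\<dots> = supp_P i (C ! i)" by (rule supp_mod_mult_inner[OF prime_ideal_in_P]) (use d in auto)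
    finally have eq: "supp_P i (g * h) = supp_P i (C ! i)" .
    have "g * h \<in> P"
      using coeffs_in_P_in_imp_P[OF diff] P_mult[OF C_in_P[OF i]] P_diff_iff by blast
    then show ?thesis
      using P_prime cofactor_frac_unit[OF i, of g h] cofactor_frac_unit[OF i, of h g] eq g h VU
      by (auto simp: mult.commute)
  qed
  ultimately show ?thesis
    unfolding irreducible_over_frac_def
    using prime_ideal_in_P char_set_not_frac_unit[OF i] by (auto simp: polys_in_def)
qed

lemma first_cofactor_unit:
  assumes C: "C \<noteq> []" and f: "C ! 0 = a * b" and aP: "a \<in> P"
  shows "b dvd 1"
proof -
  have i: "0 < length C" using C by simp
  have "a \<noteq> 0" "b \<noteq> 0"
    using f autoreduced_nonconst[OF C_autoreduced i] by (auto simp: nonconst_def)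
  then have "dvars a \<subseteq> dvars (C ! 0)" "dvars b \<subseteq> dvars (C ! 0)"
    using f dvars_factor[of a b] dvars_factor[of b a] by (simp_all add: mult.commute)
  then have ab: "a \<in> polys_in (Vs (Suc 0))" "b \<in> polys_in (Vs (Suc 0))"
    using vars_upto_Suc[of C 0] by (simp_all add: polys_in_def vars_upto_0)
  have P_in_0: "P_in {} = {0}" using P_constants by simp
  have "supp_P 0 b \<noteq> {}" using \<open>b \<noteq> 0\<close> by (simp add: P_in_0 vars_upto_0 supp_mod_empty_zero)
  then have "deg_P 0 b = 0" using cofactor_deg_P_zero[OF i ab(1) aP] f by simp
  then have "dvars b = {}" using dvars_empty_if_deg_mod_zero by (simp add: P_in_0 vars_upto_0)
  then show ?thesis using const_dvd_one \<open>b \<noteq> 0\<close> by blast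
qed

lemma irreducible_first:
  assumes C: "C \<noteq> []"
  shows "irreducible (C ! 0)"
proof (rule irreducibleI)
  have "nonconst (C ! 0)" using C by (simp add: autoreduced_nonconst[OF C_autoreduced])
  then show "C ! 0 \<noteq> 0" "\<not> C ! 0 dvd 1" by (auto simp: nonconst_def nonconst_not_dvd_one)
next
  fix a b assume f: "C ! 0 = a * b"
  then have "a \<in> P \<or> b \<in> P" using C_in_P C P_prime by (metis length_greater_0_conv)
  then show "a dvd 1 \<or> b dvd 1"
    using first_cofactor_unit[OF C f] first_cofactor_unit[OF C, of b a] f by (auto simp: mult.commute)
qed

lemma irreducible_chain_char_set: "irreducible_chain le C"
  unfolding irreducible_chain_def Let_def
proof (intro conjI allI impI)
  show "irreducible (C ! 0)" if "C \<noteq> []" using that by (rule irreducible_first)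
next
  fix i assume i: "0 < i" "i < length C"
  have "saturation_in (Vs i) (set (take i C)) (initial le ` set (take i C)) = P_in (Vs i)"
    using i by (intro saturation_eq_P_in[OF C_char_set]) simp
  then show "irreducible_over_frac (\<Union>j<i. dvars (C ! j))
      (saturation_in (\<Union>j<i. dvars (C ! j)) (set (take i C)) (initial le ` set (take i C)))
      (dvars (C ! i) - (\<Union>j<i. dvars (C ! j))) (C ! i)"
    using irreducible_over_frac_char_set[OF i(2)] by (simp add: vars_upto_def)
qed

text \<open>Differentiating C_i with respect to a new variable v lowers its degree over k[V_i]/P
  by one without raising the degree in the leader, so the derivative cannot lie in P.\<close>

lemma pderivv_char_set_notin_P:
  assumes i: "i < length C" and v: "v \<in> dvars (C ! i)" "v \<notin> Vs i"
  shows "pderivv v (C ! i) \<notin> P"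
proof
  let ?a = "pderivv v (C ! i)"
  assume aP: "?a \<in> P"
  have I: "is_ideal_in (Vs i) (P_in (Vs i))" by (rule is_ideal_in_P_in)
  note supp_iff = supp_mod_pderivv_iff[OF I v(2)]
  have aW: "?a \<in> polys_in (Vs (Suc i))"
    using dvars_pderivv[of v "C ! i"] vars_upto_Suc[of C i] by (auto simp: polys_in_def)
  have "supp_P i ?a \<noteq> {}"
  proof -
    obtain m where m: "m \<in> keys (C ! i)" "v \<in> keys m" using v(1) by (auto simp: dvars_def)
    let ?g = "outer (Vs i) m"
    have g: "?g \<in> supp_P i (C ! i)"
      using vcoeff_char_set_notin[OF i m(1)] by (auto simp: supp_mod_def keys_outer)
    have "?g - single v 1 + single v 1 = ?g"
      using m(2) lookup_outer_notin[OF v(2)]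
      by (intro poly_mapping_eqI) (auto simp: lookup_add lookup_minus lookup_single_if in_keys_iff)
    moreover have "keys (?g - single v 1) \<inter> Vs i = {}"
      by (auto simp: in_keys_iff lookup_minus lookup_outer)
    ultimately have "?g - single v 1 \<in> supp_P i ?a" using supp_iff g by simp
    then show ?thesis by blast
  qed
  moreover have "\<forall>c\<in>supp_P i ?a. lookup c (ldr i) \<le> ldeg i"
  proof
    fix c assume c: "c \<in> supp_P i ?a"
    then have "keys c \<inter> Vs i = {}" by (simp add: supp_mod_def)
    then have "c + single v 1 \<in> supp_P i (C ! i)" using supp_iff c by blast
    then have "lookup (c + single v 1) (ldr i) \<le> ldeg i"
      by (rule supp_mod_lookup_le_degv[OF I leader_notin_vars_upto[OF C_autoreduced i]])
    then show "lookup c (ldr i) \<le> ldeg i" by (simp add: lookup_add)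
  qed
  moreover have "deg_P i ?a < deg_P i (C ! i)"
  proof -
    obtain c where c: "c \<in> supp_P i ?a" "mon_deg c = deg_P i ?a"
      using deg_mod_attained[OF I \<open>supp_P i ?a \<noteq> {}\<close>] by blast
    then have "keys c \<inter> Vs i = {}" by (simp add: supp_mod_def)
    then have "c + single v 1 \<in> supp_P i (C ! i)" using supp_iff c(1) by blast
    then have "mon_deg (c + single v 1) \<le> deg_P i (C ! i)" by (rule deg_mod_ge[OF I])
    then show ?thesis using c(2) by (simp add: mon_deg_add mon_deg_single)
  qed
  ultimately show False by (rule no_supp_P_descent[OF i aP aW])
qed

lemma separant_condition_char_set: "separant_condition P C"
  unfolding separant_condition_def Let_def
proof (intro allI impI)
  fix t
  define R where "R = {r. (t, r) \<in> (\<Union>c\<in>set C. dvars c)}"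
  assume "\<exists>r. (t, r) \<in> (\<Union>c\<in>set C. dvars c)"
  then have "R \<noteq> {}" by (simp add: R_def)
  moreover have "finite R"
    unfolding R_def by (rule finite_subset[of _ "snd ` (\<Union>c\<in>set C. dvars c)"]) (force, simp add: finite_dvars)
  ultimately have "(t, Max R) \<in> (\<Union>c\<in>set C. dvars c)" using Max_in[of R] by (simp add: R_def)
  then obtain x where x: "x < length C" "(t, Max R) \<in> dvars (C ! x)" by (auto simp: in_set_conv_nth)
  define i where "i = (LEAST i. i < length C \<and> (t, Max R) \<in> dvars (C ! i))"
  have i: "i < length C" "(t, Max R) \<in> dvars (C ! i)"
    using LeastI[of "\<lambda>i. i < length C \<and> (t, Max R) \<in> dvars (C ! i)" x] x by (simp_all add: i_def)
  moreover have "(t, Max R) \<notin> Vs i"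
  proof
    assume "(t, Max R) \<in> Vs i"
    then obtain y where y: "y < i" "(t, Max R) \<in> dvars (C ! y)" by (auto simp: vars_upto_def)
    moreover have "y < length C" using y(1) i(1) by simp
    ultimately have "i \<le> y" unfolding i_def by (intro Least_le) simp
    then show False using y(1) by simp
  qed
  ultimately show "pderivv (t, Max R) (C ! (LEAST i. i < length C \<and> (t, Max R) \<in> dvars (C ! i))) \<notin> P"
    using pderivv_char_set_notin_P by (simp add: i_def)
qed

end

text \<open>Only the primality of P enters the proof.\<close>

theorem mainTheorem2:
  fixes dk :: "'k::field_char_0 \<Rightarrow> 'k"
    and D :: "('j::finite, 'k) dpoly \<Rightarrow> ('j, 'k) dpoly"
    and le :: "'j \<times> nat \<Rightarrow> 'j \<times> nat \<Rightarrow> bool"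
    and P :: "('j, 'k) dpoly set"
  assumes "is_derivation dk"
    and "extends_derivation dk D"
    and "ranking le"
    and "prime_diff_ideal D P"
  shows "\<exists>C. char_set le P C \<and> irreducible_chain le C \<and> separant_condition P C"
proof -
  interpret prime_ranked le P
    using assms(3,4) by unfold_locales (simp_all add: prime_diff_ideal_def)
  obtain C where "char_set le P C"
      "\<And>C'. char_set le P C' \<Longrightarrow> (char_measure C', char_measure C) \<notin> measure_less"
    using exists_measure_minimal_char_set by blast
  then interpret minimal_char_set le P C by unfold_locales
  show ?thesis
    using C_char_set irreducible_chain_char_set separant_condition_char_set by blast
qed

end
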